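(* Let $M\in\mathbb R^{\mathbb N\times\mathbb N}$ be bounded on $\ell_2$ and elliptic (there is $C_{\rm ell}>0$ with $Mx\cdot x\ge C_{\rm ell}\|x\|_{\ell_2}^2$), let $n_1=1<n_2<\cdots$ be a block structure, let $M(i,j)=0$ for $|i-j|>b_0$, and $M\in\mathcal B(d,b_0)$ for a metric $d$ on $\mathbb N$. Let $M=LU$ be the block-$LU$-factorization with $L$ block-lower triangular, $U$ block-upper triangular, $L(i,i)=I$. Then for every $\varepsilon>0$ there exist $b\in\mathbb N$ and a block-lower triangular $L_\varepsilon^{-1}\in\mathcal B(d,b)$ with $L_\varepsilon^{-1}(i,i)=I$ and $L_\varepsilon^{-1}(i,j)=0$ for $|i-j|>b$, such that $\|L^{-1}-L_\varepsilon^{-1}\|_2\le\varepsilon$; $L_\varepsilon^{-1}$ is invertible and $\sup_{\varepsilon>0}(\|L_\varepsilon\|_2+\|L_\varepsilon^{-1}\|_2)<\infty$.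
   Context: $\|\cdot\|_2$ is the operator norm on $\ell_2$. $M\in\mathcal B(d,b)$ iff $M_{ij}=0$ whenever $d(i,j)>b$. Block notation: $M(i,j)=M|_{\{n_i,\dots,n_{i+1}-1\}\times\{n_j,\dots,n_{j+1}-1\}}$; block-lower triangular means $M(i,j)=0$ for $i<j$. *)

theory Defs
  imports "HOL-Analysis.Analysis"
begin

text \<open>Infinite real matrices indexed by nat (0-based), acting on l2 = square-summable sequences.\<close>

type_synonym imat = "nat \<Rightarrow> nat \<Rightarrow> real"
type_synonym iseq = "nat \<Rightarrow> real"

definition in_l2 :: "iseq \<Rightarrow> bool" where
  "in_l2 x \<longleftrightarrow> summable (\<lambda>i. (x i)\<^sup>2)"

definition l2norm :: "iseq \<Rightarrow> real" where
  "l2norm x = sqrt (\<Sum>i. (x i)\<^sup>2)"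

definition matvec :: "imat \<Rightarrow> iseq \<Rightarrow> iseq" where
  "matvec A x = (\<lambda>i. \<Sum>j. A i j * x j)"

definition mat_diff :: "imat \<Rightarrow> imat \<Rightarrow> imat" where
  "mat_diff A B = (\<lambda>i j. A i j - B i j)"

text \<open>Matrix product (entries as series; finitely many nonzero terms for triangular factors).\<close>
definition mat_mult :: "imat \<Rightarrow> imat \<Rightarrow> imat" where
  "mat_mult A B = (\<lambda>i k. \<Sum>j. A i j * B j k)"

definition bounded_l2 :: "imat \<Rightarrow> bool" where
  "bounded_l2 A \<longleftrightarrow> (\<exists>C. \<forall>x. in_l2 x \<longrightarrow>
      (\<forall>i. summable (\<lambda>j. A i j * x j)) \<and> in_l2 (matvec A x) \<and>
      l2norm (matvec A x) \<le> C * l2norm x)"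

definition opnorm :: "imat \<Rightarrow> real" where
  "opnorm A = Sup {l2norm (matvec A x) | x. in_l2 x \<and> l2norm x \<le> 1}"

definition elliptic :: "imat \<Rightarrow> bool" where
  "elliptic A \<longleftrightarrow> (\<exists>C>0. \<forall>x. in_l2 x \<longrightarrow>
      (\<Sum>i. matvec A x i * x i) \<ge> C * (l2norm x)\<^sup>2)"

text \<open>Block structure: n 0 = 0 < n 1 < ... (0-based version of n_1 = 1 < n_2 < ...).\<close>
definition block_structure :: "(nat \<Rightarrow> nat) \<Rightarrow> bool" where
  "block_structure n \<longleftrightarrow> n 0 = 0 \<and> strict_mono n"

definition blockset :: "(nat \<Rightarrow> nat) \<Rightarrow> nat \<Rightarrow> nat set" where
  "blockset n i = {n i ..< n (Suc i)}"

definition block_zero :: "(nat \<Rightarrow> nat) \<Rightarrow> imat \<Rightarrow> nat \<Rightarrow> nat \<Rightarrow> bool" where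
  "block_zero n A i j \<longleftrightarrow> (\<forall>k\<in>blockset n i. \<forall>l\<in>blockset n j. A k l = 0)"

definition block_identity :: "(nat \<Rightarrow> nat) \<Rightarrow> imat \<Rightarrow> nat \<Rightarrow> bool" where
  "block_identity n A i \<longleftrightarrow>
     (\<forall>k\<in>blockset n i. \<forall>l\<in>blockset n i. A k l = (if k = l then 1 else 0))"

definition block_lower :: "(nat \<Rightarrow> nat) \<Rightarrow> imat \<Rightarrow> bool" where
  "block_lower n A \<longleftrightarrow> (\<forall>i j. i < j \<longrightarrow> block_zero n A i j)"

definition block_upper :: "(nat \<Rightarrow> nat) \<Rightarrow> imat \<Rightarrow> bool" where
  "block_upper n A \<longleftrightarrow> (\<forall>i j. j < i \<longrightarrow> block_zero n A i j)"

definition block_banded :: "(nat \<Rightarrow> nat) \<Rightarrow> nat \<Rightarrow> imat \<Rightarrow> bool" where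
  "block_banded n b A \<longleftrightarrow> (\<forall>i j. b < dist (real i) (real j) \<longrightarrow> block_zero n A i j)"

definition nat_metric :: "(nat \<Rightarrow> nat \<Rightarrow> real) \<Rightarrow> bool" where
  "nat_metric d \<longleftrightarrow> (\<forall>i j. d i j = 0 \<longleftrightarrow> i = j) \<and> (\<forall>i j. d i j = d j i) \<and>
     (\<forall>i j k. d i k \<le> d i j + d j k)"

definition in_B :: "(nat \<Rightarrow> nat \<Rightarrow> real) \<Rightarrow> nat \<Rightarrow> imat \<Rightarrow> bool" where
  "in_B d b A \<longleftrightarrow> (\<forall>i j. d i j > real b \<longrightarrow> A i j = 0)"

definition id_mat :: imat where
  "id_mat = (\<lambda>i j. if i = j then 1 else 0)"

end

theory Submission
  imports Defs
begin

text \<open>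
  On the first \<open>N\<close> blocks, the rows of block \<open>N\<close> of \<open>L\<^sup>-\<^sup>1\<close> are \<open>W = -M(N,<N) M(<N,<N)\<^sup>-\<^sup>1\<close>,
  since \<open>L\<^sup>-\<^sup>1 M = U\<close> vanishes below the block diagonal. Ellipticity makes the Richardson matrix
  \<open>R = I - \<omega> M\<close> a contraction with rate \<open>q < 1\<close> on every finite section, so truncating the
  Neumann series \<open>M\<^sup>-\<^sup>1 = \<omega> \<Sum> R\<^sup>m\<close> after \<open>k\<close> terms produces a block-banded \<open>L\<^sub>\<epsilon>\<^sup>-\<^sup>1\<close> whose error is
  \<open>W R\<^sup>k\<close>. Since \<open>M\<close> is banded, \<open>L\<^sup>-\<^sup>1\<close> and the error decay geometrically away from the block
  diagonal, and a Schur-type estimate turns these block bounds into uniform bounds on all finite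
  sections, hence on \<open>\<ell>\<^sub>2\<close>. The same scheme bounds \<open>L\<close>, and \<open>L\<^sub>\<epsilon> = L + L\<^sub>\<epsilon> (L\<^sup>-\<^sup>1 - L\<^sub>\<epsilon>\<^sup>-\<^sup>1) L\<close>
  is then bounded by a Neumann series once the error is small.
\<close>

section \<open>Finite sections of infinite matrices\<close>

definition fmatvec :: "nat set \<Rightarrow> imat \<Rightarrow> iseq \<Rightarrow> iseq" where
  "fmatvec S A x = (\<lambda>i. \<Sum>j\<in>S. A i j * x j)"

definition fmatmul :: "nat set \<Rightarrow> imat \<Rightarrow> imat \<Rightarrow> imat" where
  "fmatmul S A B = (\<lambda>i k. \<Sum>j\<in>S. A i j * B j k)"

definition opnorm_le :: "nat set \<Rightarrow> nat set \<Rightarrow> imat \<Rightarrow> real \<Rightarrow> bool" where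
  "opnorm_le S T A c \<longleftrightarrow> 0 \<le> c \<and> (\<forall>x. L2_set (fmatvec S A x) T \<le> c * L2_set x S)"

lemma L2_set_mono2: "finite T \<Longrightarrow> T' \<subseteq> T \<Longrightarrow> L2_set f T' \<le> L2_set f T"
  unfolding L2_set_def by (intro real_sqrt_le_mono sum_mono2) auto

lemma power2_L2_set: "finite S \<Longrightarrow> (L2_set x S)\<^sup>2 = (\<Sum>i\<in>S. (x i)\<^sup>2)"
  by (simp add: L2_set_def sum_nonneg)

lemma L2_set_uminus: "L2_set (\<lambda>l. - f l) A = L2_set f A"
  by (simp add: L2_set_def)

lemma L2_set_sum_le:
  assumes "finite J"
  shows "L2_set (\<lambda>i. \<Sum>j\<in>J. g j i) S \<le> (\<Sum>j\<in>J. L2_set (g j) S)"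
  using assms
proof (induction J rule: finite_induct)
  case empty then show ?case by (simp add: L2_set_0')
next
  case (insert a J)
  have "L2_set (\<lambda>i. \<Sum>j\<in>insert a J. g j i) S = L2_set (\<lambda>i. g a i + (\<Sum>j\<in>J. g j i)) S"
    using insert by simp
  also have "\<dots> \<le> L2_set (g a) S + L2_set (\<lambda>i. \<Sum>j\<in>J. g j i) S" by (rule L2_set_triangle_ineq)
  also have "\<dots> \<le> L2_set (g a) S + (\<Sum>j\<in>J. L2_set (g j) S)" using insert by simp
  finally show ?case using insert by simp
qed

lemma L2_set_restrict:
  assumes "finite S" "S' \<subseteq> S"
  shows "L2_set (\<lambda>j. if j \<in> S' then x j else 0) S = L2_set x S'"
proof -
  have "(\<Sum>j\<in>S. ((if j \<in> S' then x j else 0))\<^sup>2) = (\<Sum>j\<in>S. if j \<in> S' then (x j)\<^sup>2 else 0)"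
    by (intro sum.cong) auto
  also have "\<dots> = (\<Sum>j\<in>S'. (x j)\<^sup>2)"
    using assms by (simp add: sum.If_cases Int_absorb1 Int_commute)
  finally show ?thesis unfolding L2_set_def by simp
qed

lemma fmatvec_restrict:
  assumes "finite S" "S' \<subseteq> S"
  shows "fmatvec S A (\<lambda>j. if j \<in> S' then x j else 0) = fmatvec S' A x"
proof
  fix i
  have "fmatvec S A (\<lambda>j. if j \<in> S' then x j else 0) i = (\<Sum>j\<in>S. if j \<in> S' then A i j * x j else 0)"
    unfolding fmatvec_def by (intro sum.cong) auto
  also have "\<dots> = (\<Sum>j\<in>S'. A i j * x j)"
    using assms by (simp add: sum.If_cases Int_absorb1 Int_commute)
  finally show "fmatvec S A (\<lambda>j. if j \<in> S' then x j else 0) i = fmatvec S' A x i"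
    by (simp add: fmatvec_def)
qed

lemma sum_id_mat_left: "finite S \<Longrightarrow> i \<in> S \<Longrightarrow> (\<Sum>t\<in>S. id_mat i t * g t) = g i"
proof -
  assume "finite S" "i \<in> S"
  moreover have "(\<Sum>t\<in>S. id_mat i t * g t) = (\<Sum>t\<in>S. if t = i then g t else 0)"
    by (intro sum.cong) (auto simp: id_mat_def)
  ultimately show ?thesis by simp
qed

lemma sum_id_mat_right: "finite S \<Longrightarrow> k \<in> S \<Longrightarrow> (\<Sum>t\<in>S. g t * id_mat t k) = g k"
  using sum_id_mat_left[of S k g] by (simp add: id_mat_def mult.commute eq_commute)

lemma fmatvec_id: "finite S \<Longrightarrow> i \<in> S \<Longrightarrow> fmatvec S id_mat x i = x i"
  unfolding fmatvec_def by (rule sum_id_mat_left)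

lemma fmatvec_fmatmul: "finite T \<Longrightarrow> fmatvec S (fmatmul T B A) x = fmatvec T B (fmatvec S A x)"
  unfolding fmatvec_def fmatmul_def
  by (auto simp: sum_distrib_left sum_distrib_right mult.assoc intro!: ext sum.swap)

lemma fmatmul_id_left: "finite S \<Longrightarrow> i \<in> S \<Longrightarrow> fmatmul S id_mat B i k = B i k"
  unfolding fmatmul_def by (rule sum_id_mat_left)

lemma fmatmul_id_right: "finite S \<Longrightarrow> k \<in> S \<Longrightarrow> fmatmul S B id_mat i k = B i k"
  unfolding fmatmul_def by (rule sum_id_mat_right)

lemma fmatmul_assoc:
  "finite S \<Longrightarrow> finite T \<Longrightarrow> fmatmul S (fmatmul T A B) C = fmatmul T A (fmatmul S B C)"
  unfolding fmatmul_def
  by (auto simp: sum_distrib_left sum_distrib_right mult.assoc intro!: ext sum.swap)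

lemma opnorm_le_nonneg: "opnorm_le S T A c \<Longrightarrow> 0 \<le> c"
  by (simp add: opnorm_le_def)

lemma opnorm_leD: "opnorm_le S T A c \<Longrightarrow> L2_set (fmatvec S A x) T \<le> c * L2_set x S"
  by (simp add: opnorm_le_def)

lemma opnorm_le_mono: "opnorm_le S T A c \<Longrightarrow> c \<le> c' \<Longrightarrow> opnorm_le S T A c'"
  unfolding opnorm_le_def by (meson L2_set_nonneg mult_right_mono order_trans)

lemma opnorm_le_subset:
  assumes "opnorm_le S T A c" "finite S" "finite T" "S' \<subseteq> S" "T' \<subseteq> T"
  shows "opnorm_le S' T' A c"
  unfolding opnorm_le_def
proof (intro conjI allI)
  show "0 \<le> c" using assms(1) by (rule opnorm_le_nonneg)
  fix x :: iseq
  let ?x = "\<lambda>j. if j \<in> S' then x j else 0"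
  have "L2_set (fmatvec S' A x) T' \<le> L2_set (fmatvec S' A x) T"
    using assms by (intro L2_set_mono2) auto
  also have "\<dots> = L2_set (fmatvec S A ?x) T" using fmatvec_restrict[OF assms(2,4)] by simp
  also have "\<dots> \<le> c * L2_set ?x S" using assms(1) by (rule opnorm_leD)
  also have "\<dots> = c * L2_set x S'" using L2_set_restrict[OF assms(2,4)] by simp
  finally show "L2_set (fmatvec S' A x) T' \<le> c * L2_set x S'" .
qed

lemma opnorm_le_cong:
  assumes "opnorm_le S T A c" "\<And>i j. i \<in> T \<Longrightarrow> j \<in> S \<Longrightarrow> A i j = B i j"
  shows "opnorm_le S T B c"
proof -
  have "L2_set (fmatvec S B x) T = L2_set (fmatvec S A x) T" for x
    unfolding fmatvec_def using assms(2) by (intro L2_set_cong) auto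
  then show ?thesis using assms(1) by (simp add: opnorm_le_def)
qed

lemma opnorm_le_zero: "(\<And>i j. i \<in> T \<Longrightarrow> j \<in> S \<Longrightarrow> A i j = 0) \<Longrightarrow> opnorm_le S T A 0"
  unfolding opnorm_le_def fmatvec_def by (simp add: L2_set_0')

lemma opnorm_le_id: "finite S \<Longrightarrow> opnorm_le S S id_mat 1"
  unfolding opnorm_le_def by (auto simp: fmatvec_id intro!: eq_refl L2_set_cong)

lemma opnorm_le_add:
  assumes "opnorm_le S T A a" "opnorm_le S T B b"
  shows "opnorm_le S T (\<lambda>i j. A i j + B i j) (a + b)"
  unfolding opnorm_le_def
proof (intro conjI allI)
  show "0 \<le> a + b" using assms by (simp add: opnorm_le_def)
  fix x
  have "fmatvec S (\<lambda>i j. A i j + B i j) x = (\<lambda>i. fmatvec S A x i + fmatvec S B x i)"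
    unfolding fmatvec_def by (auto simp: algebra_simps sum.distrib)
  then have "L2_set (fmatvec S (\<lambda>i j. A i j + B i j) x) T
      \<le> L2_set (fmatvec S A x) T + L2_set (fmatvec S B x) T"
    using L2_set_triangle_ineq by metis
  also have "\<dots> \<le> a * L2_set x S + b * L2_set x S"
    using assms by (intro add_mono) (auto simp: opnorm_le_def)
  finally show "L2_set (fmatvec S (\<lambda>i j. A i j + B i j) x) T \<le> (a + b) * L2_set x S"
    by (simp add: algebra_simps)
qed

lemma opnorm_le_uminus: "opnorm_le S T A a \<Longrightarrow> opnorm_le S T (\<lambda>i j. - A i j) a"
  unfolding opnorm_le_def fmatvec_def by (simp add: sum_negf L2_set_uminus)

lemma opnorm_le_diff:
  "opnorm_le S T A a \<Longrightarrow> opnorm_le S T B b \<Longrightarrow> opnorm_le S T (\<lambda>i j. A i j - B i j) (a + b)"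
  using opnorm_le_add[of S T A a "\<lambda>i j. - B i j" b] opnorm_le_uminus by simp

lemma opnorm_le_Un:
  assumes S1: "finite S1" and S2: "finite S2" and disj: "S1 \<inter> S2 = {}"
    and b1: "opnorm_le S1 T A a" and b2: "opnorm_le S2 T A b"
  shows "opnorm_le (S1 \<union> S2) T A (a + b)"
  unfolding opnorm_le_def
proof (intro conjI allI)
  show "0 \<le> a + b" using b1 b2 by (simp add: opnorm_le_def)
  fix x :: iseq
  have "fmatvec (S1 \<union> S2) A x = (\<lambda>i. fmatvec S1 A x i + fmatvec S2 A x i)"
    unfolding fmatvec_def using S1 S2 disj by (simp add: sum.union_disjoint)
  then have "L2_set (fmatvec (S1 \<union> S2) A x) T \<le> L2_set (fmatvec S1 A x) T + L2_set (fmatvec S2 A x) T"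
    using L2_set_triangle_ineq by metis
  also have "\<dots> \<le> a * L2_set x S1 + b * L2_set x S2"
    using b1 b2 by (intro add_mono) (auto simp: opnorm_le_def)
  also have "\<dots> \<le> a * L2_set x (S1 \<union> S2) + b * L2_set x (S1 \<union> S2)"
    using b1 b2 S1 S2 by (intro add_mono mult_left_mono L2_set_mono2) (auto simp: opnorm_le_def)
  finally show "L2_set (fmatvec (S1 \<union> S2) A x) T \<le> (a + b) * L2_set x (S1 \<union> S2)"
    by (simp add: algebra_simps)
qed

lemma opnorm_le_fmatmul:
  assumes "finite T" "opnorm_le S T A a" "opnorm_le T R B b"
  shows "opnorm_le S R (fmatmul T B A) (b * a)"
  unfolding opnorm_le_def
proof (intro conjI allI)
  show "0 \<le> b * a" using assms by (simp add: opnorm_le_def)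
  fix x
  have "L2_set (fmatvec S (fmatmul T B A) x) R = L2_set (fmatvec T B (fmatvec S A x)) R"
    using fmatvec_fmatmul[OF assms(1)] by simp
  also have "\<dots> \<le> b * L2_set (fmatvec S A x) T" using assms(3) by (rule opnorm_leD)
  also have "\<dots> \<le> b * (a * L2_set x S)" using assms
    by (intro mult_left_mono) (auto simp: opnorm_le_def)
  finally show "L2_set (fmatvec S (fmatmul T B A) x) R \<le> b * a * L2_set x S" by simp
qed

lemma opnorm_le_transpose:
  assumes "finite S" "finite T" "opnorm_le S T A c"
  shows "opnorm_le T S (\<lambda>i j. A j i) c"
  unfolding opnorm_le_def
proof (intro conjI allI)
  show c0: "0 \<le> c" using assms(3) by (rule opnorm_le_nonneg)
  fix z
  define y where "y = fmatvec T (\<lambda>i j. A j i) z"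
  have "(L2_set y S)\<^sup>2 = (\<Sum>j\<in>S. y j * y j)"
    using assms by (simp add: L2_set_def sum_nonneg power2_eq_square)
  also have "\<dots> = (\<Sum>j\<in>S. (\<Sum>i\<in>T. A i j * z i) * y j)"
    by (simp add: y_def fmatvec_def)
  also have "\<dots> = (\<Sum>i\<in>T. z i * fmatvec S A y i)"
    by (simp add: fmatvec_def sum_distrib_left sum_distrib_right mult_ac sum.swap[of _ S])
  also have "\<dots> \<le> (\<Sum>i\<in>T. \<bar>z i\<bar> * \<bar>fmatvec S A y i\<bar>)"
    by (intro sum_mono) (simp add: abs_mult[symmetric])
  also have "\<dots> \<le> L2_set z T * L2_set (fmatvec S A y) T" by (rule L2_set_mult_ineq)
  also have "\<dots> \<le> L2_set z T * (c * L2_set y S)"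
    using assms(3) by (intro mult_left_mono opnorm_leD) auto
  finally have *: "(L2_set y S)\<^sup>2 \<le> c * L2_set z T * L2_set y S" by (simp add: mult_ac)
  show "L2_set y S \<le> c * L2_set z T"
  proof (cases "L2_set y S = 0")
    case True then show ?thesis using c0 by simp
  next
    case False
    then have "L2_set y S > 0" using L2_set_nonneg[of y S] by linarith
    then show ?thesis using * by (simp add: power2_eq_square)
  qed
qed

lemma opnorm_le_exists:
  assumes "finite S" "finite T"
  shows "\<exists>c. opnorm_le S T A c"
proof
  let ?c = "\<Sum>i\<in>T. \<Sum>j\<in>S. \<bar>A i j\<bar>"
  show "opnorm_le S T A ?c"
    unfolding opnorm_le_def
  proof (intro conjI allI)
    show "0 \<le> ?c" by (intro sum_nonneg) auto
    fix x
    have xj: "\<bar>x j\<bar> \<le> L2_set x S" if "j \<in> S" for j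
      using L2_set_mono2[of S "{j}" x] that assms by simp
    have "L2_set (fmatvec S A x) T \<le> (\<Sum>i\<in>T. \<bar>fmatvec S A x i\<bar>)" by (rule L2_set_le_sum_abs)
    also have "\<dots> \<le> (\<Sum>i\<in>T. \<Sum>j\<in>S. \<bar>A i j\<bar> * L2_set x S)"
    proof (intro sum_mono)
      fix i
      have "\<bar>fmatvec S A x i\<bar> \<le> (\<Sum>j\<in>S. \<bar>A i j * x j\<bar>)" unfolding fmatvec_def by (rule sum_abs)
      also have "\<dots> \<le> (\<Sum>j\<in>S. \<bar>A i j\<bar> * L2_set x S)"
        using xj by (intro sum_mono) (auto simp: abs_mult intro: mult_left_mono)
      finally show "\<bar>fmatvec S A x i\<bar> \<le> (\<Sum>j\<in>S. \<bar>A i j\<bar> * L2_set x S)" .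
    qed
    also have "\<dots> = ?c * L2_set x S" by (simp add: sum_distrib_right)
    finally show "L2_set (fmatvec S A x) T \<le> ?c * L2_set x S" .
  qed
qed

text \<open>Iterating the hypothesis from the bound that exists on finite sections gives
  \<open>a \<Sum>\<^bsub>u<m\<^esub> \<theta>\<^sup>u + \<theta>\<^sup>m c\<^sub>0\<close> for every \<open>m\<close>.\<close>

lemma opnorm_le_fixpoint:
  assumes fin: "finite S" "finite T"
    and step: "\<And>c. opnorm_le S T Y c \<Longrightarrow> opnorm_le S T Y (a + \<theta> * c)"
    and a: "0 \<le> a" and \<theta>: "0 \<le> \<theta>" "\<theta> < 1"
  shows "opnorm_le S T Y (a / (1 - \<theta>))"
proof -
  obtain c0 where c0: "opnorm_le S T Y c0" using opnorm_le_exists[OF fin] by blast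
  have iter: "opnorm_le S T Y (a * (\<Sum>u<m. \<theta> ^ u) + \<theta> ^ m * c0)" for m
  proof (induction m)
    case 0 then show ?case using c0 by simp
  next
    case (Suc m)
    from step[OF Suc.IH] show ?case
      by (simp add: sum.lessThan_Suc_shift sum_distrib_left algebra_simps
               del: sum.lessThan_Suc)
  qed
  have bnd: "opnorm_le S T Y (a / (1 - \<theta>) + \<theta> ^ m * c0)" for m
  proof (rule opnorm_le_mono[OF iter[of m]])
    have "(\<Sum>u<m. \<theta> ^ u) \<le> 1 / (1 - \<theta>)"
      using \<theta> by (simp add: sum_gp_strict divide_right_mono)
    then show "a * (\<Sum>u<m. \<theta> ^ u) + \<theta> ^ m * c0 \<le> a / (1 - \<theta>) + \<theta> ^ m * c0"
      using mult_left_mono[OF _ a] by fastforce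
  qed
  show ?thesis
    unfolding opnorm_le_def
  proof (intro conjI allI)
    show "0 \<le> a / (1 - \<theta>)" using a \<theta> by simp
    fix x :: iseq
    have "(\<lambda>m. (a / (1 - \<theta>) + \<theta> ^ m * c0) * L2_set x S) \<longlonglongrightarrow> (a / (1 - \<theta>) + 0 * c0) * L2_set x S"
      by (intro tendsto_intros LIMSEQ_power_zero) (use \<theta> in simp)
    then show "L2_set (fmatvec S Y x) T \<le> a / (1 - \<theta>) * L2_set x S"
      using LIMSEQ_le_const[of _ _ "L2_set (fmatvec S Y x) T"] bnd by (simp add: opnorm_leD)
  qed
qed

section \<open>Coercive sections and the Richardson iteration\<close>

definition quad_form :: "nat set \<Rightarrow> imat \<Rightarrow> iseq \<Rightarrow> real" where
  "quad_form S A x = (\<Sum>i\<in>S. x i * fmatvec S A x i)"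

definition coercive :: "nat set \<Rightarrow> imat \<Rightarrow> real \<Rightarrow> bool" where
  "coercive S A C \<longleftrightarrow> (\<forall>x. C * (L2_set x S)\<^sup>2 \<le> quad_form S A x)"

lemma coercive_lower_bound:
  assumes "finite S" "0 < C" "coercive S A C"
  shows "C * L2_set x S \<le> L2_set (fmatvec S A x) S"
proof -
  have "C * (L2_set x S)\<^sup>2 \<le> quad_form S A x" using assms by (simp add: coercive_def)
  also have "\<dots> \<le> (\<Sum>i\<in>S. \<bar>x i\<bar> * \<bar>fmatvec S A x i\<bar>)"
    unfolding quad_form_def by (intro sum_mono) (simp add: abs_mult[symmetric])
  also have "\<dots> \<le> L2_set x S * L2_set (fmatvec S A x) S" by (rule L2_set_mult_ineq)
  finally have *: "C * (L2_set x S)\<^sup>2 \<le> L2_set x S * L2_set (fmatvec S A x) S" .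
  show ?thesis
  proof (cases "L2_set x S = 0")
    case True then show ?thesis by simp
  next
    case False
    then have "L2_set x S > 0" using L2_set_nonneg[of x S] by linarith
    then show ?thesis using * by (simp add: power2_eq_square mult.assoc[symmetric])
  qed
qed

lemma quad_form_transpose: "quad_form S (\<lambda>i j. A j i) x = quad_form S A x"
proof -
  have "quad_form S (\<lambda>i j. A j i) x = (\<Sum>i\<in>S. \<Sum>j\<in>S. x i * A j i * x j)"
    by (simp add: quad_form_def fmatvec_def sum_distrib_left mult.assoc)
  also have "\<dots> = (\<Sum>j\<in>S. \<Sum>i\<in>S. x i * A j i * x j)" by (rule sum.swap)
  also have "\<dots> = quad_form S A x" by (simp add: quad_form_def fmatvec_def sum_distrib_left mult_ac)
  finally show ?thesis .
qed

lemma coercive_transpose: "coercive S A C \<Longrightarrow> coercive S (\<lambda>i j. A j i) C"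
  unfolding coercive_def using quad_form_transpose[of S A] by simp

lemma opnorm_le_right_coercive:
  assumes S: "finite S" and T: "finite T" and C: "0 < C" and eY: "coercive S (\<lambda>a b. Y b a) C"
    and b: "opnorm_le S T (fmatmul S X Y) c"
  shows "opnorm_le S T X (c / C)"
proof -
  have c0: "0 \<le> c" using b by (simp add: opnorm_le_def)
  have bt: "opnorm_le T S (\<lambda>i j. fmatmul S X Y j i) c" by (rule opnorm_le_transpose[OF S T b])
  have "opnorm_le T S (\<lambda>a b. X b a) (c / C)"
    unfolding opnorm_le_def
  proof (intro conjI allI)
    show "0 \<le> c / C" using c0 C by simp
    fix z :: iseq
    define w where "w = fmatvec T (\<lambda>a b. X b a) z"
    have "fmatvec T (\<lambda>i j. fmatmul S X Y j i) z = fmatvec T (fmatmul S (\<lambda>a b. Y b a) (\<lambda>a b. X b a)) z"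
      by (simp add: fmatmul_def mult.commute)
    also have "\<dots> = fmatvec S (\<lambda>a b. Y b a) w" by (simp add: fmatvec_fmatmul[OF S] w_def)
    finally have eq: "fmatvec T (\<lambda>i j. fmatmul S X Y j i) z = fmatvec S (\<lambda>a b. Y b a) w" .
    have "C * L2_set w S \<le> L2_set (fmatvec S (\<lambda>a b. Y b a) w) S"
      by (rule coercive_lower_bound[OF S C eY])
    also have "\<dots> \<le> c * L2_set z T"
    proof -
      from bt have "L2_set (fmatvec T (\<lambda>i j. fmatmul S X Y j i) z) S \<le> c * L2_set z T"
        unfolding opnorm_le_def by blast
      then show ?thesis unfolding eq .
    qed
    finally show "L2_set w S \<le> c / C * L2_set z T" using C by (simp add: field_simps)
  qed
  from opnorm_le_transpose[OF T S this] show ?thesis by simp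
qed

lemma opnorm_le_richardson:
  assumes S: "finite S" and C: "0 < C" "C \<le> B" and bA: "opnorm_le S S A B" and eA: "coercive S A C"
  shows "opnorm_le S S (\<lambda>i j. id_mat i j - (C / B\<^sup>2) * A i j) (sqrt (1 - C\<^sup>2 / B\<^sup>2))"
  unfolding opnorm_le_def
proof (intro conjI allI)
  have B0: "0 < B" using C by linarith
  have "C\<^sup>2 \<le> B\<^sup>2" using C by (intro power_mono) auto
  then have "C\<^sup>2 / B\<^sup>2 \<le> 1" using B0 by (simp add: divide_le_eq)
  then show "0 \<le> sqrt (1 - C\<^sup>2 / B\<^sup>2)" by simp
  fix x :: iseq
  define w where "w = C / B\<^sup>2"
  have w0: "0 \<le> w" using C B0 by (simp add: w_def)
  let ?y = "fmatvec S A x"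
  have eq: "fmatvec S (\<lambda>i j. id_mat i j - w * A i j) x i = x i - w * ?y i" if "i \<in> S" for i
  proof -
    have "fmatvec S (\<lambda>i j. id_mat i j - w * A i j) x i = fmatvec S id_mat x i - w * ?y i"
      unfolding fmatvec_def by (simp add: algebra_simps sum_subtractf sum_distrib_left)
    then show ?thesis using fmatvec_id[OF S that] by simp
  qed
  have "(L2_set (fmatvec S (\<lambda>i j. id_mat i j - w * A i j) x) S)\<^sup>2 = (\<Sum>i\<in>S. (x i - w * ?y i)\<^sup>2)"
    using S eq by (simp add: power2_L2_set)
  also have "\<dots> = (\<Sum>i\<in>S. (x i)\<^sup>2) - 2 * w * quad_form S A x + w\<^sup>2 * (\<Sum>i\<in>S. (?y i)\<^sup>2)"
    unfolding quad_form_def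
      by (simp add: power2_eq_square algebra_simps sum.distrib sum_subtractf sum_distrib_left)
  also have "\<dots> \<le> (L2_set x S)\<^sup>2 - 2 * w * (C * (L2_set x S)\<^sup>2) + w\<^sup>2 * (B * L2_set x S)\<^sup>2"
  proof -
    have "quad_form S A x \<ge> C * (L2_set x S)\<^sup>2" using eA by (simp add: coercive_def)
    moreover have "(\<Sum>i\<in>S. (?y i)\<^sup>2) \<le> (B * L2_set x S)\<^sup>2"
    proof -
      have "L2_set ?y S \<le> B * L2_set x S" using bA by (simp add: opnorm_le_def)
      then have "(L2_set ?y S)\<^sup>2 \<le> (B * L2_set x S)\<^sup>2" by (intro power_mono) auto
      then show ?thesis using S by (simp add: power2_L2_set)
    qed
    ultimately show ?thesis using w0 S
      by (simp add: power2_L2_set) (intro add_mono diff_mono mult_left_mono order_refl; simp)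
  qed
  also have "\<dots> = (1 - C\<^sup>2 / B\<^sup>2) * (L2_set x S)\<^sup>2"
    using B0 unfolding w_def by (simp add: field_simps power2_eq_square)
  finally have *: "(L2_set (fmatvec S (\<lambda>i j. id_mat i j - w * A i j) x) S)\<^sup>2
      \<le> (sqrt (1 - C\<^sup>2 / B\<^sup>2) * L2_set x S)\<^sup>2"
    using \<open>C\<^sup>2 / B\<^sup>2 \<le> 1\<close> by (simp add: power_mult_distrib)
  show "L2_set (fmatvec S (\<lambda>i j. id_mat i j - (C / B\<^sup>2) * A i j) x) S \<le> sqrt (1 - C\<^sup>2 / B\<^sup>2) * L2_set x S"
    using power2_le_imp_le[OF *] \<open>C\<^sup>2 / B\<^sup>2 \<le> 1\<close> by (simp add: w_def)
qed

fun fmatpow :: "nat set \<Rightarrow> imat \<Rightarrow> nat \<Rightarrow> imat" where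
  "fmatpow S A 0 = id_mat"
| "fmatpow S A (Suc m) = fmatmul S A (fmatpow S A m)"

lemma opnorm_le_fmatpow: "finite S \<Longrightarrow> opnorm_le S S A q \<Longrightarrow> opnorm_le S S (fmatpow S A m) (q ^ m)"
  by (induction m) (auto intro: opnorm_le_id opnorm_le_fmatmul)

definition neumann_sum :: "nat set \<Rightarrow> imat \<Rightarrow> real \<Rightarrow> nat \<Rightarrow> imat" where
  "neumann_sum S R w k = (\<lambda>i j. w * (\<Sum>m<k. fmatpow S R m i j))"

lemma fmatmul_neumann_sum:
  assumes S: "finite S" and R: "\<And>a b. a \<in> S \<Longrightarrow> b \<in> S \<Longrightarrow> R a b = id_mat a b - w * A a b"
    and t: "t \<in> S"
  shows "fmatmul S A (neumann_sum S R w k) t l = id_mat t l - fmatpow S R k t l"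
proof -
  have "fmatmul S A (neumann_sum S R w k) t l = (\<Sum>m<k. \<Sum>r\<in>S. (w * A t r) * fmatpow S R m r l)"
    unfolding fmatmul_def neumann_sum_def
      by (simp add: sum_distrib_left mult_ac sum.swap[of _ "{..<k}"])
  also have "\<dots> = (\<Sum>m<k. \<Sum>r\<in>S. (id_mat t r - R t r) * fmatpow S R m r l)"
    using R t by (intro sum.cong refl) auto
  also have "\<dots> = (\<Sum>m<k. fmatpow S R m t l - fmatpow S R (Suc m) t l)"
    by (intro sum.cong refl)
      (simp add: left_diff_distrib sum_subtractf fmatmul_id_left[OF S t, unfolded fmatmul_def] fmatmul_def)
  also have "\<dots> = fmatpow S R 0 t l - fmatpow S R k t l" by (rule sum_lessThan_telescope')
  finally show ?thesis by simp
qed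

lemma fmatpow_nonzero_dist:
  fixes dl :: "nat \<Rightarrow> nat \<Rightarrow> real"
  assumes refl: "\<And>a. dl a a = 0" and tri: "\<And>a b c. dl a c \<le> dl a b + dl b c"
    and R: "\<And>a b. R a b \<noteq> 0 \<Longrightarrow> dl a b \<le> \<beta>"
  shows "fmatpow S R m i j \<noteq> 0 \<Longrightarrow> dl i j \<le> m * \<beta>"
proof (induction m arbitrary: i)
  case 0 then show ?case by (auto simp: id_mat_def refl split: if_splits)
next
  case (Suc m)
  then obtain r where "R i r * fmatpow S R m r j \<noteq> 0"
    by (auto simp: fmatmul_def intro: sum.not_neutral_contains_not_neutral)
  then have "R i r \<noteq> 0" "fmatpow S R m r j \<noteq> 0" by auto
  then have "dl i r \<le> \<beta>" "dl r j \<le> m * \<beta>" using R Suc.IH by auto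
  then show ?case using tri[where a=i and b=r and c=j] by (simp add: algebra_simps)
qed

lemma neumann_sum_nonzero_dist:
  fixes dl :: "nat \<Rightarrow> nat \<Rightarrow> real"
  assumes refl: "\<And>a. dl a a = 0" and tri: "\<And>a b c. dl a c \<le> dl a b + dl b c"
    and R: "\<And>a b. R a b \<noteq> 0 \<Longrightarrow> dl a b \<le> \<beta>" and b0: "0 \<le> \<beta>"
  shows "neumann_sum S R w k i j \<noteq> 0 \<Longrightarrow> dl i j \<le> real (k - 1) * \<beta>"
proof -
  assume "neumann_sum S R w k i j \<noteq> 0"
  then obtain m where m: "m < k" "fmatpow S R m i j \<noteq> 0"
    by (auto simp: neumann_sum_def intro: sum.not_neutral_contains_not_neutral)
  have "dl i j \<le> m * \<beta>" by (rule fmatpow_nonzero_dist[where dl=dl and R=R, OF refl tri R m(2)])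
  also have "\<dots> \<le> real (k - 1) * \<beta>" using m b0 by (intro mult_right_mono) auto
  finally show ?thesis .
qed

lemma sum_geometric_le:
  fixes q :: real
  assumes "0 \<le> q" "q < 1"
  shows "(\<Sum>t<K. q ^ t) \<le> 1 / (1 - q)"
proof -
  have "(\<Sum>t<K. q ^ t) = (1 - q ^ K) / (1 - q)" using assms by (simp add: sum_gp_strict)
  also have "\<dots> \<le> 1 / (1 - q)" using assms by (intro divide_right_mono) auto
  finally show ?thesis .
qed

lemma sum_geometric_shift_le:
  fixes q :: real
  assumes q: "0 \<le> q" "q < 1"
  shows "(\<Sum>t<K. q ^ (t - k)) \<le> k + 1 / (1 - q)"
proof -
  have "(\<Sum>t<K. q ^ (t - k)) \<le> (\<Sum>t<k + K. q ^ (t - k))"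
    using q by (intro sum_mono2) auto
  also have "\<dots> = (\<Sum>t\<in>{0..<k}. q ^ (t - k)) + (\<Sum>t\<in>{k..<k + K}. q ^ (t - k))"
    unfolding atLeast0LessThan[symmetric] by (rule sum.atLeastLessThan_concat[symmetric]) auto
  also have "(\<Sum>t\<in>{0..<k}. q ^ (t - k)) = (\<Sum>t\<in>{0..<k}. 1)" by (intro sum.cong) auto
  also have "\<dots> = k" by simp
  also have "(\<Sum>t\<in>{k..<k + K}. q ^ (t - k)) = (\<Sum>u\<in>{0..<K}. q ^ u)"
    using sum.shift_bounds_nat_ivl[of "\<lambda>t. q ^ (t - k)" 0 k K] by (simp add: add.commute)
  also have "\<dots> \<le> 1 / (1 - q)" using sum_geometric_le[OF q] by (simp add: atLeast0LessThan)
  finally show ?thesis by simp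
qed

lemma sum_div_le:
  fixes g :: "nat \<Rightarrow> real"
  assumes g0: "\<And>t. 0 \<le> g t" and b: "1 \<le> b"
  shows "(\<Sum>m<K. g (m div b)) \<le> b * (\<Sum>t<K. g t)"
proof -
  have "(\<Sum>m<K. g (m div b)) \<le> (\<Sum>m<K * b. g (m div b))"
    using b g0 by (intro sum_mono2) auto
  also have "\<dots> = (\<Sum>t<K. \<Sum>m\<in>{t * b..<t * b + b}. g (m div b))"
    by (rule sum.nat_group[symmetric])
  also have "\<dots> = (\<Sum>t<K. \<Sum>m\<in>{t * b..<t * b + b}. g t)"
  proof (intro sum.cong refl)
    fix t m assume "m \<in> {t * b..<t * b + b}"
    then have "m div b = t" using b by (auto intro: div_nat_eqI simp: mult.commute)
    then show "g (m div b) = g t" by simp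
  qed
  also have "\<dots> = b * (\<Sum>t<K. g t)" by (simp add: sum_distrib_left)
  finally show ?thesis .
qed

lemma sum_lessThan_shift_le:
  fixes f h :: "nat \<Rightarrow> real"
  assumes "\<And>m. f (Suc m) = h m" "\<And>m. 0 \<le> h m" "0 \<le> f 0"
  shows "(\<Sum>m<K. f m) \<le> f 0 + (\<Sum>m<K. h m)"
proof (cases K)
  case 0 then show ?thesis using assms by simp
next
  case (Suc K')
  have "(\<Sum>m<K. f m) = f 0 + (\<Sum>m<K'. h m)" unfolding Suc sum.lessThan_Suc_shift using assms(1)
    by simp
  also have "\<dots> \<le> f 0 + (\<Sum>m<K. h m)" using Suc assms(2) by (intro add_left_mono sum_mono2) auto
  finally show ?thesis .
qed

lemma Cauchy_Schwarz_weighted: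
  fixes w a :: "nat \<Rightarrow> real"
  assumes "\<And>j. j \<in> J \<Longrightarrow> 0 \<le> w j"
  shows "(\<Sum>j\<in>J. w j * a j)\<^sup>2 \<le> (\<Sum>j\<in>J. w j) * (\<Sum>j\<in>J. w j * (a j)\<^sup>2)"
proof -
  have "(\<Sum>j\<in>J. w j * a j) = (\<Sum>j\<in>J. sqrt (w j) * (sqrt (w j) * a j))"
    using assms by (intro sum.cong) (auto simp: mult.assoc[symmetric])
  also have "(\<dots>)\<^sup>2 \<le> (\<Sum>j\<in>J. (sqrt (w j))\<^sup>2) * (\<Sum>j\<in>J. (sqrt (w j) * a j)\<^sup>2)"
    by (rule Cauchy_Schwarz_ineq_sum)
  also have "\<dots> = (\<Sum>j\<in>J. w j) * (\<Sum>j\<in>J. w j * (a j)\<^sup>2)"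
    using assms by (simp add: power_mult_distrib)
  finally show ?thesis .
qed

lemma sum_shift_le:
  fixes f :: "nat \<Rightarrow> real"
  assumes "\<And>m. 0 \<le> f m"
  shows "(\<Sum>N<K. if j \<le> N then f (N - j) else 0) \<le> (\<Sum>m<K. f m)"
proof -
  have "(\<Sum>N<K. if j \<le> N then f (N - j) else 0) = (\<Sum>N\<in>{j..<K}. f (N - j))"
    by (simp add: sum.If_cases) (intro sum.cong; auto)
  also have "\<dots> = (\<Sum>m\<in>(\<lambda>N. N - j) ` {j..<K}. f m)"
    by (subst sum.reindex) (auto simp: inj_on_def)
  also have "\<dots> \<le> (\<Sum>m<K. f m)" using assms by (intro sum_mono2) auto
  finally show ?thesis .
qed

lemma convolution_row_le:
  fixes f a :: "nat \<Rightarrow> real"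
  assumes f0: "\<And>m. 0 \<le> f m" and N: "N < K"
  shows "(\<Sum>j\<le>N. f (N - j) * a j)\<^sup>2 \<le> (\<Sum>m<K. f m) * (\<Sum>j\<le>N. f (N - j) * (a j)\<^sup>2)"
proof -
  have "(\<Sum>j\<le>N. f (N - j) * a j)\<^sup>2 \<le> (\<Sum>j\<le>N. f (N - j)) * (\<Sum>j\<le>N. f (N - j) * (a j)\<^sup>2)"
    using f0 by (intro Cauchy_Schwarz_weighted) auto
  also have "(\<Sum>j\<le>N. f (N - j)) = (\<Sum>m\<le>N. f m)"
    by (rule sum.reindex_bij_witness[of _ "\<lambda>j. N - j" "\<lambda>j. N - j"]) (auto simp: atMost_iff)
  also have "\<dots> * (\<Sum>j\<le>N. f (N - j) * (a j)\<^sup>2) \<le> (\<Sum>m<K. f m) * (\<Sum>j\<le>N. f (N - j) * (a j)\<^sup>2)"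
    using N f0 by (intro mult_right_mono sum_mono2 sum_nonneg) auto
  finally show ?thesis .
qed

lemma sum_convolution_le:
  fixes f a :: "nat \<Rightarrow> real"
  assumes f0: "\<And>m. 0 \<le> f m"
  shows "(\<Sum>N<K. \<Sum>j\<le>N. f (N - j) * (a j)\<^sup>2) \<le> (\<Sum>m<K. f m) * (\<Sum>j<K. (a j)\<^sup>2)"
proof -
  have "(\<Sum>N<K. \<Sum>j\<le>N. f (N - j) * (a j)\<^sup>2)
      = (\<Sum>N<K. \<Sum>j<K. if j \<le> N then f (N - j) * (a j)\<^sup>2 else 0)"
  proof (rule sum.cong[OF refl])
    fix N assume "N \<in> {..<K}"
    then have "{..<K} \<inter> {j. j \<le> N} = {..N}" by auto
    then show "(\<Sum>j\<le>N. f (N - j) * (a j)\<^sup>2) = (\<Sum>j<K. if j \<le> N then f (N - j) * (a j)\<^sup>2 else 0)"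
      by (simp add: sum.If_cases)
  qed
  also have "\<dots> = (\<Sum>j<K. (a j)\<^sup>2 * (\<Sum>N<K. if j \<le> N then f (N - j) else 0))"
    by (subst sum.swap) (simp add: sum_distrib_left mult.commute if_distrib cong: if_cong)
  also have "\<dots> \<le> (\<Sum>j<K. (a j)\<^sup>2 * (\<Sum>m<K. f m))"
    using f0 by (intro sum_mono mult_left_mono sum_shift_le) auto
  also have "\<dots> = (\<Sum>m<K. f m) * (\<Sum>j<K. (a j)\<^sup>2)"
    by (simp add: sum_distrib_left mult.commute)
  finally show ?thesis .
qed

lemma convolution_ineq:
  fixes f a :: "nat \<Rightarrow> real"
  assumes f0: "\<And>m. 0 \<le> f m"
  shows "(\<Sum>N<K. (\<Sum>j\<le>N. f (N - j) * a j)\<^sup>2) \<le> (\<Sum>m<K. f m)\<^sup>2 * (\<Sum>j<K. (a j)\<^sup>2)"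
proof -
  let ?s = "\<Sum>m<K. f m"
  have "(\<Sum>N<K. (\<Sum>j\<le>N. f (N - j) * a j)\<^sup>2) \<le> (\<Sum>N<K. ?s * (\<Sum>j\<le>N. f (N - j) * (a j)\<^sup>2))"
    using f0 by (intro sum_mono convolution_row_le) auto
  also have "\<dots> = ?s * (\<Sum>N<K. \<Sum>j\<le>N. f (N - j) * (a j)\<^sup>2)" by (simp add: sum_distrib_left)
  also have "\<dots> \<le> ?s * (?s * (\<Sum>j<K. (a j)\<^sup>2))"
    using f0 by (intro mult_left_mono sum_convolution_le sum_nonneg) auto
  finally show ?thesis by (simp add: power2_eq_square mult_ac)
qed

definition block_of :: "(nat \<Rightarrow> nat) \<Rightarrow> nat \<Rightarrow> nat" where
  "block_of n i = (LEAST N. i < n (Suc N))"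

lemma block_structure_mono: "block_structure n \<Longrightarrow> a \<le> b \<Longrightarrow> n a \<le> n b"
  unfolding block_structure_def by (simp add: strict_mono_less_eq)

lemma block_structure_ge: "block_structure n \<Longrightarrow> N \<le> n N"
  unfolding block_structure_def using strict_mono_imp_increasing by blast

lemma lessThan_block_Suc:
  "block_structure n \<Longrightarrow> {..<n (Suc N)} = {..<n N} \<union> blockset n N"
  using block_structure_mono[of n N "Suc N"] by (auto simp: blockset_def)

lemma lessThan_block_disjoint: "{..<n N} \<inter> blockset n N = {}"
  by (auto simp: blockset_def)

lemma sum_lessThan_block_Suc:
  "block_structure n \<Longrightarrow> (\<Sum>l<n (Suc N). g l) = (\<Sum>l<n N. g l) + (\<Sum>l\<in>blockset n N. g l)"
  unfolding lessThan_block_Suc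
  by (rule sum.union_disjoint) (auto simp: blockset_def)

lemma sum_lessThan_blocks:
  assumes "block_structure n"
  shows "(\<Sum>i<n K. g i) = (\<Sum>N<K. \<Sum>i\<in>blockset n N. g i)"
  using assms by (induction K) (simp_all add: block_structure_def sum_lessThan_block_Suc)

lemma block_of_bounds:
  assumes bs: "block_structure n"
  shows "n (block_of n i) \<le> i" "i < n (Suc (block_of n i))"
proof -
  have ex: "\<exists>N. i < n (Suc N)" using block_structure_ge[OF bs, of "Suc i"]
    by (intro exI[of _ i]) simp
  show "i < n (Suc (block_of n i))" unfolding block_of_def by (rule LeastI_ex[OF ex])
  show "n (block_of n i) \<le> i"
  proof (cases "block_of n i")
    case 0 then show ?thesis using bs by (simp add: block_structure_def)
  next
    case (Suc M)
    have "\<not> i < n (Suc M)" using Suc unfolding block_of_def by (metis lessI not_less_Least)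
    then show ?thesis using Suc by simp
  qed
qed

lemma less_block_start_iff: "block_structure n \<Longrightarrow> i < n N \<longleftrightarrow> block_of n i < N"
  using block_of_bounds[of n i] block_structure_mono[of n N "block_of n i"]
    block_structure_mono[of n "Suc (block_of n i)" N]
  by (meson leD leI less_le_trans Suc_leI order.strict_trans1)

lemma in_blockset_iff: "block_structure n \<Longrightarrow> i \<in> blockset n N \<longleftrightarrow> block_of n i = N"
  unfolding blockset_def using less_block_start_iff[of n i N] less_block_start_iff[of n i "Suc N"]
    by auto

lemma block_zero_entry:
  "block_structure n \<Longrightarrow> block_zero n A (block_of n k) (block_of n l) \<Longrightarrow> A k l = 0"
  unfolding block_zero_def using in_blockset_iff by blast

lemma block_lower_entry:
  assumes "block_structure n" "block_lower n A" "A k l \<noteq> 0"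
  shows "block_of n l \<le> block_of n k"
  using assms block_zero_entry[of n A k l] unfolding block_lower_def by (meson not_le)

lemma block_upper_entry:
  assumes "block_structure n" "block_upper n A" "A k l \<noteq> 0"
  shows "block_of n k \<le> block_of n l"
  using assms block_zero_entry[of n A k l] unfolding block_upper_def by (meson not_le)

lemma block_lowerI:
  assumes "block_structure n" "\<And>k l. A k l \<noteq> 0 \<Longrightarrow> block_of n l \<le> block_of n k"
  shows "block_lower n A"
  unfolding block_lower_def block_zero_def using assms in_blockset_iff[OF assms(1)] by force

lemma block_lower_zero:
  assumes "block_structure n" "block_lower n A" "n (Suc (block_of n i)) \<le> l"
  shows "A i l = 0"
  using assms block_lower_entry[OF assms(1,2), of i l] less_block_start_iff[OF assms(1), of l]
  by (metis le_imp_less_Suc leD)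

lemma block_banded_mono: "block_banded n b A \<Longrightarrow> b \<le> b' \<Longrightarrow> block_banded n b' A"
  unfolding block_banded_def by (meson le_less_trans of_nat_le_iff)

lemma in_B_mono: "in_B d b A \<Longrightarrow> b \<le> b' \<Longrightarrow> in_B d b' A"
  unfolding in_B_def by (meson le_less_trans of_nat_le_iff)

lemma block_diag_entry:
  assumes "block_structure n" "\<forall>i. block_identity n A i" "block_of n l = block_of n k"
  shows "A k l = id_mat k l"
  using assms in_blockset_iff[OF assms(1)] unfolding block_identity_def id_mat_def by metis

text \<open>A Schur-type test: block bounds depending only on the block distance give a bound on the
  section by the \<open>\<ell>\<^sub>1\<close>-norm of the decay profile \<open>f\<close> (Cauchy-Schwarz and Young's inequality).\<close>

lemma L2_set_block_row_le:
  assumes bs: "block_structure n" and N: "N < K"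
    and blk: "\<And>j. j \<le> N \<Longrightarrow> opnorm_le (blockset n j) (blockset n N) A (f (N - j))"
    and up: "\<And>j i l. N < j \<Longrightarrow> j < K \<Longrightarrow> i \<in> blockset n N \<Longrightarrow> l \<in> blockset n j \<Longrightarrow> A i l = 0"
  shows "L2_set (fmatvec {..<n K} A x) (blockset n N)
    \<le> (\<Sum>j\<le>N. f (N - j) * L2_set x (blockset n j))"
proof -
  have "fmatvec {..<n K} A x i = (\<Sum>j\<le>N. fmatvec (blockset n j) A x i)" if i: "i \<in> blockset n N" for i
  proof -
    have "fmatvec {..<n K} A x i = (\<Sum>j<K. fmatvec (blockset n j) A x i)"
      unfolding fmatvec_def by (rule sum_lessThan_blocks[OF bs])
    also have "\<dots> = (\<Sum>j\<le>N. fmatvec (blockset n j) A x i)"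
    proof (rule sum.mono_neutral_right)
      show "\<forall>j\<in>{..<K} - {..N}. fmatvec (blockset n j) A x i = 0"
        using up[OF _ _ i] by (auto simp: fmatvec_def not_le intro!: sum.neutral)
    qed (use N in auto)
    finally show ?thesis .
  qed
  then have "L2_set (fmatvec {..<n K} A x) (blockset n N)
      = L2_set (\<lambda>i. \<Sum>j\<le>N. fmatvec (blockset n j) A x i) (blockset n N)"
    by (intro L2_set_cong) simp_all
  also have "\<dots> \<le> (\<Sum>j\<le>N. L2_set (fmatvec (blockset n j) A x) (blockset n N))"
    by (intro L2_set_sum_le) auto
  also have "\<dots> \<le> (\<Sum>j\<le>N. f (N - j) * L2_set x (blockset n j))"
    using blk by (intro sum_mono opnorm_leD) auto
  finally show ?thesis .
qed

lemma opnorm_le_blockwise: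
  assumes bs: "block_structure n" and f0: "\<And>m. 0 \<le> f m"
    and blk: "\<And>N j. N < K \<Longrightarrow> j \<le> N \<Longrightarrow> opnorm_le (blockset n j) (blockset n N) A (f (N - j))"
    and up: "\<And>N j i l. N < j \<Longrightarrow> j < K \<Longrightarrow> i \<in> blockset n N \<Longrightarrow> l \<in> blockset n j \<Longrightarrow> A i l = 0"
  shows "opnorm_le {..<n K} {..<n K} A (\<Sum>m<K. f m)"
  unfolding opnorm_le_def
proof (intro conjI allI)
  show s0: "0 \<le> (\<Sum>m<K. f m)" using f0 by (simp add: sum_nonneg)
  fix x :: iseq
  let ?a = "\<lambda>j. L2_set x (blockset n j)"
  have fb: "finite (blockset n N)" for N by (simp add: blockset_def)
  have "(L2_set (fmatvec {..<n K} A x) {..<n K})\<^sup>2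
      = (\<Sum>N<K. (L2_set (fmatvec {..<n K} A x) (blockset n N))\<^sup>2)"
    unfolding power2_L2_set[OF finite_lessThan] power2_L2_set[OF fb]
      by (rule sum_lessThan_blocks[OF bs])
  also have "\<dots> \<le> (\<Sum>N<K. (\<Sum>j\<le>N. f (N - j) * ?a j)\<^sup>2)"
    using L2_set_block_row_le[OF bs _ blk up] by (intro sum_mono power_mono) auto
  also have "\<dots> \<le> (\<Sum>m<K. f m)\<^sup>2 * (\<Sum>j<K. (?a j)\<^sup>2)" by (rule convolution_ineq[OF f0])
  also have "(\<Sum>j<K. (?a j)\<^sup>2) = (L2_set x {..<n K})\<^sup>2"
    unfolding power2_L2_set[OF finite_lessThan] power2_L2_set[OF fb]
      by (rule sum_lessThan_blocks[OF bs, symmetric])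
  finally have "(L2_set (fmatvec {..<n K} A x) {..<n K})\<^sup>2 \<le> ((\<Sum>m<K. f m) * L2_set x {..<n K})\<^sup>2"
    by (simp only: power_mult_distrib)
  then show "L2_set (fmatvec {..<n K} A x) {..<n K} \<le> (\<Sum>m<K. f m) * L2_set x {..<n K}"
    by (rule power2_le_imp_le) (simp add: s0)
qed

lemma opnorm_le_block_lower:
  assumes bs: "block_structure n" and A: "block_lower n A" and f0: "\<And>m. 0 \<le> f m"
    and blk: "\<And>N j. j \<le> N \<Longrightarrow> opnorm_le (blockset n j) (blockset n N) A (f (N - j))"
    and sum: "(\<Sum>m<K. f m) \<le> c"
  shows "opnorm_le {..<n K} {..<n K} A c"
proof (rule opnorm_le_mono[OF opnorm_le_blockwise[OF bs f0 blk] sum])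
  show "A i l = 0" if "N < j" "i \<in> blockset n N" "l \<in> blockset n j" for N j i l
    using A that unfolding block_lower_def block_zero_def by blast
qed

section \<open>Block lower triangular matrices on \<open>\<ell>\<^sub>2\<close>\<close>

lemma matvec_block_lower:
  assumes "block_structure n" "block_lower n A"
  shows "matvec A x i = (\<Sum>j<n (Suc (block_of n i)). A i j * x j)"
  unfolding matvec_def using block_lower_zero[OF assms]
    by (intro suminf_finite) (auto simp: not_less)

lemma summable_block_lower_row:
  assumes "block_structure n" "block_lower n A"
  shows "summable (\<lambda>j. A i j * x j)"
  using block_lower_zero[OF assms]
  by (intro summable_finite[of "{..<n (Suc (block_of n i))}"]) (auto simp: not_less)

lemma mat_mult_block_lower:
  assumes "block_structure n" "block_lower n A"
  shows "mat_mult A B i k = (\<Sum>j<n (Suc (block_of n i)). A i j * B j k)"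
  unfolding mat_mult_def using block_lower_zero[OF assms]
    by (intro suminf_finite) (auto simp: not_less)

lemma matvec_eq_fmatvec:
  assumes bs: "block_structure n" and A: "block_lower n A" and i: "i < n K"
  shows "matvec A x i = fmatvec {..<n K} A x i"
proof -
  have "n (Suc (block_of n i)) \<le> n K"
    using i less_block_start_iff[OF bs] block_structure_mono[OF bs] by (simp add: Suc_le_eq)
  then show ?thesis unfolding matvec_block_lower[OF bs A] fmatvec_def
    using block_lower_zero[OF bs A] by (intro sum.mono_neutral_left) auto
qed

lemma l2_bound_if_sections:
  assumes bs: "block_structure n" and A: "block_lower n A"
    and sec: "\<And>K. opnorm_le {..<n K} {..<n K} A c" and x: "in_l2 x"
  shows "in_l2 (matvec A x) \<and> l2norm (matvec A x) \<le> c * l2norm x"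
proof -
  let ?S = "\<Sum>i. (x i)\<^sup>2"
  have c0: "0 \<le> c" using sec[of 0] by (rule opnorm_le_nonneg)
  have sx: "summable (\<lambda>i. (x i)\<^sup>2)" using x by (simp add: in_l2_def)
  have part: "(\<Sum>i<m. (matvec A x i)\<^sup>2) \<le> c\<^sup>2 * ?S" for m
  proof -
    have "(\<Sum>i<m. (matvec A x i)\<^sup>2) \<le> (\<Sum>i<n m. (matvec A x i)\<^sup>2)"
      using block_structure_ge[OF bs, of m] by (intro sum_mono2) auto
    also have "\<dots> = (L2_set (fmatvec {..<n m} A x) {..<n m})\<^sup>2"
      by (simp add: power2_L2_set matvec_eq_fmatvec[OF bs A])
    also have "\<dots> \<le> (c * L2_set x {..<n m})\<^sup>2"
      using sec[of m] by (intro power_mono opnorm_leD) auto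
    also have "\<dots> = c\<^sup>2 * (\<Sum>i<n m. (x i)\<^sup>2)" by (simp add: power_mult_distrib power2_L2_set)
    also have "\<dots> \<le> c\<^sup>2 * ?S"
      using sx by (intro mult_left_mono sum_le_suminf) auto
    finally show ?thesis .
  qed
  have sm: "summable (\<lambda>i. (matvec A x i)\<^sup>2)"
  proof (rule bounded_imp_summable[of _ "c\<^sup>2 * ?S"])
    show "(\<Sum>k\<le>m. (matvec A x k)\<^sup>2) \<le> c\<^sup>2 * ?S" for m
      using part[of "Suc m"] unfolding lessThan_Suc_atMost .
  qed simp
  have "l2norm (matvec A x) \<le> sqrt (c\<^sup>2 * ?S)"
    unfolding l2norm_def using suminf_le_const[OF sm part] by simp
  also have "\<dots> = c * l2norm x" using c0 by (simp add: l2norm_def real_sqrt_mult)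
  finally show ?thesis using sm by (simp add: in_l2_def)
qed

text \<open>A block lower triangular matrix acts on every vector through finitely many entries per row,
  so uniform bounds on its leading sections are bounds on \<open>\<ell>\<^sub>2\<close>.\<close>

lemma bounded_l2_if_sections:
  assumes bs: "block_structure n" and A: "block_lower n A"
    and sec: "\<And>K. opnorm_le {..<n K} {..<n K} A c"
  shows "bounded_l2 A" "opnorm A \<le> c"
proof -
  note main = l2_bound_if_sections[OF bs A sec]
  show "bounded_l2 A"
    unfolding bounded_l2_def using main summable_block_lower_row[OF bs A] by blast
  show "opnorm A \<le> c"
    unfolding opnorm_def
  proof (rule cSup_least)
    have "in_l2 (\<lambda>_. 0) \<and> l2norm (\<lambda>_. 0) \<le> 1" by (simp add: in_l2_def l2norm_def)
    then show "{l2norm (matvec A x) |x. in_l2 x \<and> l2norm x \<le> 1} \<noteq> {}" by blast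
  next
    fix v assume "v \<in> {l2norm (matvec A x) |x. in_l2 x \<and> l2norm x \<le> 1}"
    then obtain x where x: "in_l2 x" "l2norm x \<le> 1" "v = l2norm (matvec A x)" by blast
    then have "v \<le> c * l2norm x" using main by blast
    also have "\<dots> \<le> c" using x opnorm_le_nonneg[OF sec[of 0]] by (simp add: mult_left_le)
    finally show "v \<le> c" .
  qed
qed

lemma sum_assoc_block_lower:
  assumes bs: "block_structure n" and A: "block_lower n A" and B: "block_lower n B"
  shows "(\<Sum>t<n (Suc (block_of n i)). A i t * (\<Sum>s<n (Suc (block_of n t)). B t s * C s l))
       = (\<Sum>s<n (Suc (block_of n i)). (\<Sum>t<n (Suc (block_of n i)). A i t * B t s) * C s l)"
proof -
  let ?r = "\<lambda>i. n (Suc (block_of n i))"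
  have "A i t * (\<Sum>s<?r t. B t s * C s l) = A i t * (\<Sum>s<?r i. B t s * C s l)" for t
  proof (cases "A i t = 0")
    case False
    then have "block_of n t \<le> block_of n i" by (rule block_lower_entry[OF bs A])
    then have "?r t \<le> ?r i" using block_structure_mono[OF bs] by simp
    then show ?thesis
      using block_lower_zero[OF bs B, of t] by (simp, intro disjI2 sum.mono_neutral_left) auto
  qed simp
  then have "(\<Sum>t<?r i. A i t * (\<Sum>s<?r t. B t s * C s l)) = (\<Sum>t<?r i. \<Sum>s<?r i. A i t * B t s * C s l)"
    by (simp add: sum_distrib_left mult.assoc)
  also have "\<dots> = (\<Sum>s<?r i. (\<Sum>t<?r i. A i t * B t s) * C s l)"
    by (subst sum.swap) (simp add: sum_distrib_right)
  finally show ?thesis .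
qed

lemma matvec_inverse:
  assumes bs: "block_structure n" and A: "block_lower n A" and B: "block_lower n B"
    and AB: "\<And>i t. t < n (Suc (block_of n i)) \<Longrightarrow>
               (\<Sum>l<n (Suc (block_of n i)). A i l * B l t) = id_mat i t"
  shows "matvec A (matvec B x) = x"
proof
  fix i
  let ?r = "\<lambda>i. n (Suc (block_of n i))"
  have "matvec A (matvec B x) i = (\<Sum>l<?r i. A i l * (\<Sum>t<?r l. B l t * x t))"
    by (simp add: matvec_block_lower[OF bs A] matvec_block_lower[OF bs B])
  also have "\<dots> = (\<Sum>t<?r i. (\<Sum>l<?r i. A i l * B l t) * x t)"
    by (rule sum_assoc_block_lower[OF bs A B])
  also have "\<dots> = (\<Sum>t<?r i. id_mat i t * x t)" using AB by simp
  also have "\<dots> = x i" using block_of_bounds(2)[OF bs, of i] by (simp add: sum_id_mat_left)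
  finally show "matvec A (matvec B x) i = x i" .
qed

definition cutoff :: "nat set \<Rightarrow> iseq \<Rightarrow> iseq" where
  "cutoff S x = (\<lambda>j. if j \<in> S then x j else 0)"

lemma in_l2_cutoff: "finite S \<Longrightarrow> in_l2 (cutoff S x)"
  unfolding in_l2_def cutoff_def by (intro summable_finite[of S]) auto

lemma l2norm_cutoff: "finite S \<Longrightarrow> l2norm (cutoff S x) = L2_set x S"
proof -
  assume S: "finite S"
  have "(\<Sum>i. (cutoff S x i)\<^sup>2) = (\<Sum>i\<in>S. (cutoff S x i)\<^sup>2)"
    using S by (intro suminf_finite) (auto simp: cutoff_def)
  then show ?thesis by (simp add: l2norm_def L2_set_def cutoff_def)
qed

lemma matvec_cutoff: "finite S \<Longrightarrow> matvec A (cutoff S x) i = fmatvec S A x i"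
proof -
  assume S: "finite S"
  have "matvec A (cutoff S x) i = (\<Sum>j\<in>S. A i j * cutoff S x j)" unfolding matvec_def
    using S by (intro suminf_finite) (auto simp: cutoff_def)
  then show ?thesis by (simp add: fmatvec_def cutoff_def)
qed

lemma opnorm_le_if_l2_bound:
  assumes S: "finite S" and T: "finite T" and C: "0 \<le> C"
    and bound: "\<And>x. in_l2 x \<Longrightarrow> in_l2 (matvec A x) \<and> l2norm (matvec A x) \<le> C * l2norm x"
  shows "opnorm_le S T A C"
  unfolding opnorm_le_def
proof (intro conjI allI)
  show "0 \<le> C" by (rule C)
  fix x :: iseq
  have Ax: "matvec A (cutoff S x) = fmatvec S A x" using matvec_cutoff[OF S] by auto
  have sm: "summable (\<lambda>i. (fmatvec S A x i)\<^sup>2)"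
    using bound[OF in_l2_cutoff[OF S, of x]] Ax by (simp add: in_l2_def)
  have "L2_set (fmatvec S A x) T \<le> sqrt (\<Sum>i. (fmatvec S A x i)\<^sup>2)"
    unfolding L2_set_def using sm T by (intro real_sqrt_le_mono sum_le_suminf) auto
  also have "\<dots> = l2norm (matvec A (cutoff S x))" by (simp add: l2norm_def Ax)
  also have "\<dots> \<le> C * L2_set x S" using bound[OF in_l2_cutoff[OF S, of x]] l2norm_cutoff[OF S, of x]
    by simp
  finally show "L2_set (fmatvec S A x) T \<le> C * L2_set x S" .
qed

lemma coercive_if_elliptic_bound:
  assumes S: "finite S"
    and ell: "\<And>x. in_l2 x \<Longrightarrow> (\<Sum>i. matvec A x i * x i) \<ge> C * (l2norm x)\<^sup>2"
  shows "coercive S A C"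
  unfolding coercive_def
proof
  fix x :: iseq
  have "(\<Sum>i. matvec A (cutoff S x) i * cutoff S x i) = (\<Sum>i\<in>S. matvec A (cutoff S x) i * cutoff S x i)"
    using S by (intro suminf_finite) (auto simp: cutoff_def)
  also have "\<dots> = quad_form S A x" unfolding quad_form_def matvec_cutoff[OF S]
    by (intro sum.cong refl) (simp add: cutoff_def mult.commute)
  finally show "C * (L2_set x S)\<^sup>2 \<le> quad_form S A x"
    using ell[OF in_l2_cutoff[OF S, of x]] l2norm_cutoff[OF S, of x] by simp
qed

section \<open>Inverting unit block lower triangular matrices\<close>

text \<open>Block forward substitution. The bound \<open>min (n (block_of n i)) i\<close> equals \<open>n (block_of n i)\<close>
  for a block structure; the \<open>min\<close> only makes termination evident.\<close>

function unit_lower_inv :: "(nat \<Rightarrow> nat) \<Rightarrow> imat \<Rightarrow> nat \<Rightarrow> nat \<Rightarrow> real" where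
  "unit_lower_inv n A i j = (if block_of n i \<le> block_of n j then id_mat i j
     else - (\<Sum>l<min (n (block_of n i)) i. A i l * unit_lower_inv n A l j))"
  by auto
termination by (relation "Wellfounded.measure (\<lambda>(n, A, i, j). i)") auto

declare unit_lower_inv.simps[simp del]

lemma sum_block_lower_outside:
  assumes bs: "block_structure n" and A: "block_lower n A" and B: "block_lower n B"
    and t: "n (Suc (block_of n i)) \<le> t"
  shows "(\<Sum>l<n (Suc (block_of n i)). A i l * B l t) = 0"
proof (rule sum.neutral, rule ballI, rule ccontr)
  fix l assume l: "l \<in> {..<n (Suc (block_of n i))}" and nz: "A i l * B l t \<noteq> 0"
  then have "block_of n t \<le> block_of n l" using block_lower_entry[OF bs B] by auto
  moreover have "block_of n l \<le> block_of n i" using l less_block_start_iff[OF bs]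
    by (simp add: less_Suc_eq_le)
  ultimately have "t < n (Suc (block_of n i))" using less_block_start_iff[OF bs]
    by (simp add: less_Suc_eq_le)
  then show False using t by simp
qed

locale unit_block_lower =
  fixes n :: "nat \<Rightarrow> nat" and A :: imat
  assumes bs: "block_structure n" and lower: "block_lower n A"
    and diag: "\<And>i l. block_of n l = block_of n i \<Longrightarrow> A i l = id_mat i l"
begin

abbreviation "Y \<equiv> unit_lower_inv n A"

lemma Y_entry:
  "Y i j = (if block_of n i \<le> block_of n j then id_mat i j else - (\<Sum>l<n (block_of n i). A i l * Y l j))"
  using block_of_bounds(1)[OF bs, of i] unit_lower_inv.simps[of n A i j] by (simp add: min_absorb1)

lemma Y_lower: "block_lower n Y"
proof (rule block_lowerI[OF bs])
  fix i l assume nz: "Y i l \<noteq> 0"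
  show "block_of n l \<le> block_of n i"
  proof (rule ccontr)
    assume "\<not> block_of n l \<le> block_of n i"
    then have "Y i l = id_mat i l" "i \<noteq> l" using Y_entry[of i l] by auto
    then show False using nz by (simp add: id_mat_def)
  qed
qed

lemma A_Y_inverse: "(\<Sum>l<n (Suc (block_of n i)). A i l * Y l t) = id_mat i t"
proof (cases "t < n (Suc (block_of n i))")
  case False
  then show ?thesis
    using sum_block_lower_outside[OF bs lower Y_lower, of i t] block_of_bounds(2)[OF bs, of i]
    by (auto simp: id_mat_def)
next
  case True
  let ?N = "block_of n i"
  have iB: "i \<in> blockset n ?N" using in_blockset_iff[OF bs] by simp
  have "(\<Sum>l\<in>blockset n ?N. A i l * Y l t) = (\<Sum>l\<in>blockset n ?N. id_mat i l * Y l t)"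
    using diag in_blockset_iff[OF bs] by (intro sum.cong refl) auto
  then have own: "(\<Sum>l\<in>blockset n ?N. A i l * Y l t) = Y i t"
    using iB by (simp add: sum_id_mat_left blockset_def)
  show ?thesis
  proof (cases "?N \<le> block_of n t")
    case True
    have "A i l * Y l t = 0" if "l < n ?N" for l
    proof -
      have "block_of n l < ?N" using that less_block_start_iff[OF bs] by simp
      then have "Y l t = id_mat l t" "l \<noteq> t" using True Y_entry[of l t] by auto
      then show ?thesis by (simp add: id_mat_def)
    qed
    then have "(\<Sum>l<n ?N. A i l * Y l t) = 0" by (intro sum.neutral) simp
    then show ?thesis
      using own sum_lessThan_block_Suc[OF bs, of "\<lambda>l. A i l * Y l t" ?N] True Y_entry[of i t]
      by simp
  next
    case False
    then have "Y i t = - (\<Sum>l<n ?N. A i l * Y l t)" "i \<noteq> t" using Y_entry[of i t] by auto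
    then show ?thesis using own sum_lessThan_block_Suc[OF bs, of "\<lambda>l. A i l * Y l t" ?N]
      by (simp add: id_mat_def)
  qed
qed

lemma sum_Y_A_head:
  assumes IH: "\<And>m t. m < n (block_of n i) \<Longrightarrow>
                 (\<Sum>l<n (Suc (block_of n m)). Y m l * A l t) = id_mat m t"
  shows "(\<Sum>l<n (block_of n i). Y i l * A l t) = - (if t < n (block_of n i) then A i t else 0)"
proof -
  let ?N = "block_of n i"
  have inner: "(\<Sum>l<n ?N. Y m l * A l t) = id_mat m t" if m: "m < n ?N" for m
  proof -
    have "n (Suc (block_of n m)) \<le> n ?N"
      using m less_block_start_iff[OF bs] block_structure_mono[OF bs] by (simp add: Suc_le_eq)
    then have "(\<Sum>l<n ?N. Y m l * A l t) = (\<Sum>l<n (Suc (block_of n m)). Y m l * A l t)"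
      using block_lower_zero[OF bs Y_lower] by (intro sum.mono_neutral_right) auto
    then show ?thesis using IH[OF m] by simp
  qed
  have "(\<Sum>l<n ?N. Y i l * A l t) = (\<Sum>l<n ?N. - (\<Sum>m<n ?N. A i m * Y m l) * A l t)"
    using Y_entry less_block_start_iff[OF bs] by (intro sum.cong refl) auto
  also have "\<dots> = - (\<Sum>l<n ?N. \<Sum>m<n ?N. A i m * (Y m l * A l t))"
    by (simp add: sum_distrib_right sum_negf mult.assoc)
  also have "\<dots> = - (\<Sum>m<n ?N. A i m * (\<Sum>l<n ?N. Y m l * A l t))"
    by (subst sum.swap) (simp add: sum_distrib_left)
  also have "\<dots> = - (\<Sum>m<n ?N. A i m * id_mat m t)" using inner by simp
  also have "\<dots> = - (\<Sum>m<n ?N. if m = t then A i m else 0)"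
    by (intro arg_cong[where f=uminus] sum.cong refl) (auto simp: id_mat_def)
  finally show ?thesis by simp
qed

lemma Y_A_inverse: "(\<Sum>l<n (Suc (block_of n i)). Y i l * A l t) = id_mat i t"
proof (induction i arbitrary: t rule: less_induct)
  case (less i)
  let ?N = "block_of n i"
  have IH: "(\<Sum>l<n (Suc (block_of n m)). Y m l * A l t) = id_mat m t" if "m < n ?N" for m t
    using that block_of_bounds(1)[OF bs, of i] by (intro less.IH) simp
  show ?case
  proof (cases "t < n (Suc ?N)")
    case False
    then show ?thesis
      using sum_block_lower_outside[OF bs Y_lower lower, of i t] block_of_bounds(2)[OF bs, of i]
      by (auto simp: id_mat_def)
  next
    case True
    have "(\<Sum>l\<in>blockset n ?N. Y i l * A l t) = (\<Sum>l\<in>blockset n ?N. id_mat i l * A l t)"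
      using Y_entry in_blockset_iff[OF bs] by (intro sum.cong refl) auto
    then have own: "(\<Sum>l\<in>blockset n ?N. Y i l * A l t) = A i t"
      using in_blockset_iff[OF bs, of i ?N] by (simp add: sum_id_mat_left blockset_def)
    have head: "(\<Sum>l<n ?N. Y i l * A l t) = - (if t < n ?N then A i t else 0)"
      by (rule sum_Y_A_head) (rule IH)
    note split = sum_lessThan_block_Suc[OF bs, of "\<lambda>l. Y i l * A l t" ?N]
    show ?thesis
    proof (cases "t < n ?N")
      case True
      then have "i \<noteq> t" using block_of_bounds(1)[OF bs, of i] by auto
      then show ?thesis using head own True split by (simp add: id_mat_def)
    next
      case False
      then have "block_of n t = ?N"
        using \<open>t < n (Suc ?N)\<close> less_block_start_iff[OF bs, of t] by (simp add: less_Suc_eq)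
      then show ?thesis using diag head own False split by simp
    qed
  qed
qed

lemma matvec_Y_A: "matvec Y (matvec A x) = x"
  by (rule matvec_inverse[OF bs Y_lower lower Y_A_inverse])

lemma matvec_A_Y: "matvec A (matvec Y x) = x"
  by (rule matvec_inverse[OF bs lower Y_lower A_Y_inverse])

end

section \<open>The block LU factorization of a banded elliptic matrix\<close>

text \<open>The band width is assumed positive; the theorem reduces to this case by enlarging \<open>b0\<close>.\<close>

locale block_LU =
  fixes M L U Linv :: imat and n :: "nat \<Rightarrow> nat" and d :: "nat \<Rightarrow> nat \<Rightarrow> real" and b0 :: nat
  assumes bM: "bounded_l2 M" and eM: "elliptic M" and bs: "block_structure n"
    and bandM: "block_banded n b0 M" and met: "nat_metric d" and inBM: "in_B d b0 M"
    and Llow: "block_lower n L" and Lid: "\<forall>i. block_identity n L i" and Uup: "block_upper n U"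
    and MLU: "M = mat_mult L U" and Linvlow: "block_lower n Linv"
    and LLinv: "mat_mult L Linv = id_mat" and LinvL: "mat_mult Linv L = id_mat"
    and b0pos: "1 \<le> b0"
begin

abbreviation "r i \<equiv> n (Suc (block_of n i))"
abbreviation "Sec N \<equiv> {..<n N}"
abbreviation "Blk N \<equiv> blockset n N"

lemma finite_Blk: "finite (Blk N)"
  by (simp add: blockset_def)

lemma Sec_Blk: "Sec (Suc N) = Sec N \<union> Blk N" "Sec N \<inter> Blk N = {}"
  by (simp_all add: lessThan_block_Suc[OF bs] lessThan_block_disjoint)

lemma in_Blk: "i \<in> Blk N \<longleftrightarrow> block_of n i = N"
  by (rule in_blockset_iff[OF bs])

lemma in_Sec: "i \<in> Sec N \<longleftrightarrow> block_of n i < N"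
  using less_block_start_iff[OF bs] by simp

lemma r_le_Sec: "i \<in> Sec K \<Longrightarrow> r i \<le> n K"
  using in_Sec block_structure_mono[OF bs] by (simp add: Suc_le_eq)

lemma L_diag: "block_of n l = block_of n k \<Longrightarrow> L k l = id_mat k l"
  by (rule block_diag_entry[OF bs Lid])

lemma Linv_diag:
  assumes kl: "block_of n l = block_of n k"
  shows "Linv k l = id_mat k l"
proof -
  have "id_mat k l = mat_mult L Linv k l" using LLinv by simp
  also have "\<dots> = (\<Sum>t<r k. L k t * Linv t l)" by (rule mat_mult_block_lower[OF bs Llow])
  also have "\<dots> = (\<Sum>t<r k. id_mat k t * Linv t l)"
  proof (rule sum.cong[OF refl])
    fix t assume t: "t \<in> {..<r k}"
    show "L k t * Linv t l = id_mat k t * Linv t l"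
    proof (cases "Linv t l = 0")
      case False
      then have "block_of n l \<le> block_of n t" by (rule block_lower_entry[OF bs Linvlow])
      moreover have "block_of n t \<le> block_of n k" using t in_Sec by (simp add: less_Suc_eq_le)
      ultimately show ?thesis using kl L_diag by simp
    qed simp
  qed
  also have "\<dots> = Linv k l" using block_of_bounds(2)[OF bs] by (simp add: sum_id_mat_left)
  finally show ?thesis by simp
qed

lemma M_entry: "M i l = (\<Sum>s<r i. L i s * U s l)"
  using MLU mat_mult_block_lower[OF bs Llow] by simp

lemma U_entry: "U i l = (\<Sum>t<r i. Linv i t * M t l)"
proof -
  have "(\<Sum>t<r i. Linv i t * M t l) = (\<Sum>t<r i. Linv i t * (\<Sum>s<r t. L t s * U s l))"
    by (simp add: M_entry)
  also have "\<dots> = (\<Sum>s<r i. (\<Sum>t<r i. Linv i t * L t s) * U s l)"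
    by (rule sum_assoc_block_lower[OF bs Linvlow Llow])
  also have "\<dots> = (\<Sum>s<r i. id_mat i s * U s l)"
    using LinvL mat_mult_block_lower[OF bs Linvlow] by metis
  also have "\<dots> = U i l" using block_of_bounds(2)[OF bs] by (simp add: sum_id_mat_left)
  finally show ?thesis by simp
qed

lemma M_block_dist: "M k l \<noteq> 0 \<Longrightarrow> dist (real (block_of n k)) (real (block_of n l)) \<le> b0"
  using bandM block_zero_entry[OF bs, of M k l] unfolding block_banded_def by (meson not_le)

lemma M_dist: "M k l \<noteq> 0 \<Longrightarrow> d k l \<le> b0"
  using inBM unfolding in_B_def by (meson not_less)

definition c_ell :: real where
  "c_ell = (SOME C. 0 < C \<and> (\<forall>x. in_l2 x \<longrightarrow> (\<Sum>i. matvec M x i * x i) \<ge> C * (l2norm x)\<^sup>2))"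

lemma c_ell: "0 < c_ell" "in_l2 x \<Longrightarrow> (\<Sum>i. matvec M x i * x i) \<ge> c_ell * (l2norm x)\<^sup>2"
proof -
  have "\<exists>C. 0 < C \<and> (\<forall>x. in_l2 x \<longrightarrow> (\<Sum>i. matvec M x i * x i) \<ge> C * (l2norm x)\<^sup>2)"
    using eM by (simp add: elliptic_def)
  from someI_ex[OF this] show "0 < c_ell" "in_l2 x \<Longrightarrow> (\<Sum>i. matvec M x i * x i) \<ge> c_ell * (l2norm x)\<^sup>2"
    by (simp_all add: c_ell_def)
qed

definition c_M :: real where
  "c_M = (SOME C. \<forall>x. in_l2 x \<longrightarrow>
      (\<forall>i. summable (\<lambda>j. M i j * x j)) \<and> in_l2 (matvec M x) \<and> l2norm (matvec M x) \<le> C * l2norm x)"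

lemma c_M: "in_l2 x \<Longrightarrow> in_l2 (matvec M x) \<and> l2norm (matvec M x) \<le> c_M * l2norm x"
proof -
  have "\<exists>C. \<forall>x. in_l2 x \<longrightarrow>
      (\<forall>i. summable (\<lambda>j. M i j * x j)) \<and> in_l2 (matvec M x) \<and> l2norm (matvec M x) \<le> C * l2norm x"
    using bM by (simp add: bounded_l2_def)
  from someI_ex[OF this] show "in_l2 x \<Longrightarrow> in_l2 (matvec M x) \<and> l2norm (matvec M x) \<le> c_M * l2norm x"
    unfolding c_M_def by blast
qed

definition c_bnd :: real where "c_bnd = max c_M c_ell"

lemma c_bnd: "0 < c_bnd" "c_ell \<le> c_bnd" "c_M \<le> c_bnd"
  using c_ell(1) by (auto simp: c_bnd_def)

lemma opnorm_le_M:
  assumes "finite S" "finite T"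
  shows "opnorm_le S T M c_bnd"
proof (rule opnorm_le_if_l2_bound[OF assms])
  show "0 \<le> c_bnd" using c_bnd(1) by simp
  fix x assume x: "in_l2 x"
  have "c_M * l2norm x \<le> c_bnd * l2norm x"
    using c_bnd(3) x
    by (intro mult_right_mono) (auto simp: l2norm_def in_l2_def intro: suminf_nonneg)
  with c_M[OF x] show "in_l2 (matvec M x) \<and> l2norm (matvec M x) \<le> c_bnd * l2norm x" by linarith
qed

lemma coercive_M: "finite S \<Longrightarrow> coercive S M c_ell"
  by (rule coercive_if_elliptic_bound[OF _ c_ell(2)])

lemma Linv_M_row:
  assumes i: "i \<in> Blk N" and l: "l \<in> Sec N"
  shows "(\<Sum>t\<in>Sec N. Linv i t * M t l) = - M i l"
proof -
  have bi: "block_of n i = N" using i in_Blk by simp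
  have "U i l = 0" using block_upper_entry[OF bs Uup, of i l] l bi in_Sec by fastforce
  then have "0 = (\<Sum>t<r i. Linv i t * M t l)" using U_entry by simp
  also have "\<dots> = (\<Sum>t\<in>Sec N. Linv i t * M t l) + (\<Sum>t\<in>Blk N. Linv i t * M t l)"
    using bi Sec_Blk by (simp add: sum.union_disjoint finite_Blk)
  also have "(\<Sum>t\<in>Blk N. Linv i t * M t l) = (\<Sum>t\<in>Blk N. id_mat i t * M t l)"
    using Linv_diag bi in_Blk by (intro sum.cong refl) auto
  also have "\<dots> = M i l" using i finite_Blk by (simp add: sum_id_mat_left)
  finally show ?thesis by linarith
qed

lemma fmatmul_Linv_M: "i \<in> Blk N \<Longrightarrow> t \<in> Sec N \<Longrightarrow> fmatmul (Sec N) Linv M i t = - M i t"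
  unfolding fmatmul_def by (rule Linv_M_row)

lemma opnorm_le_Linv_row: "opnorm_le (Sec N) (Blk N) Linv (c_bnd / c_ell)"
proof -
  have "opnorm_le (Sec N) (Blk N) (fmatmul (Sec N) Linv M) c_bnd"
    using opnorm_le_uminus[OF opnorm_le_M[OF finite_lessThan finite_Blk]]
    by (rule opnorm_le_cong) (simp add: fmatmul_Linv_M)
  from opnorm_le_right_coercive[OF finite_lessThan finite_Blk c_ell(1)
      coercive_transpose[OF coercive_M[OF finite_lessThan]] this]
  show ?thesis .
qed

subsection \<open>Richardson iteration and decay of \<open>L\<^sup>-\<^sup>1\<close>\<close>

definition omega :: real where "omega = c_ell / c_bnd\<^sup>2"
definition R :: imat where "R = (\<lambda>a b. id_mat a b - omega * M a b)"
definition rate :: real where "rate = sqrt (1 - c_ell\<^sup>2 / c_bnd\<^sup>2)"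

lemma rate: "0 \<le> rate" "rate < 1"
proof -
  have "c_ell\<^sup>2 \<le> c_bnd\<^sup>2" using c_bnd c_ell by (intro power_mono) auto
  then have "c_ell\<^sup>2 / c_bnd\<^sup>2 \<le> 1" using c_bnd by (simp add: divide_le_eq)
  then show "0 \<le> rate" by (simp add: rate_def)
  have "0 < c_ell\<^sup>2 / c_bnd\<^sup>2" using c_bnd c_ell by simp
  then show "rate < 1" by (simp add: rate_def)
qed

lemma opnorm_le_R: "finite S \<Longrightarrow> opnorm_le S S R rate"
  unfolding R_def omega_def rate_def
    using opnorm_le_richardson[OF _ c_ell(1) c_bnd(2) opnorm_le_M coercive_M] by simp

lemma opnorm_le_R_pow: "finite S \<Longrightarrow> opnorm_le S S (fmatpow S R s) (rate ^ s)"
  by (rule opnorm_le_fmatpow[OF _ opnorm_le_R])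

definition block_dist :: "nat \<Rightarrow> nat \<Rightarrow> real" where
  "block_dist a b = dist (real (block_of n a)) (real (block_of n b))"

lemma block_dist_refl: "block_dist a a = 0" by (simp add: block_dist_def)
lemma block_dist_triangle: "block_dist a c \<le> block_dist a b + block_dist b c"
  unfolding block_dist_def by (rule dist_triangle)

lemma d_refl: "d a a = 0" using met unfolding nat_metric_def by blast
lemma d_triangle: "d a c \<le> d a b + d b c" using met unfolding nat_metric_def by blast

lemma R_nonzero: "R a b \<noteq> 0 \<Longrightarrow> block_dist a b \<le> b0 \<and> d a b \<le> b0"
proof -
  assume nz: "R a b \<noteq> 0"
  show ?thesis
  proof (cases "a = b")
    case True then show ?thesis by (simp add: block_dist_refl d_refl)
  next
    case False
    then have "M a b \<noteq> 0" using nz by (simp add: R_def id_mat_def)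
    then show ?thesis using M_block_dist M_dist by (simp add: block_dist_def)
  qed
qed

lemma neumann_sum_block_dist: "neumann_sum S R omega k i j \<noteq> 0 \<Longrightarrow> block_dist i j \<le> real (k - 1) * b0"
  by (rule neumann_sum_nonzero_dist[where dl=block_dist, OF block_dist_refl block_dist_triangle])
    (use R_nonzero in auto)

lemma R_pow_block_dist: "fmatpow S R m i j \<noteq> 0 \<Longrightarrow> block_dist i j \<le> real m * b0"
  by (rule fmatpow_nonzero_dist[where dl=block_dist, OF block_dist_refl block_dist_triangle])
    (use R_nonzero in auto)

lemma Linv_row_decomp:
  assumes i: "i \<in> Blk N" and l: "l \<in> Sec N"
  shows "Linv i l
    = fmatmul (Sec N) Linv (fmatpow (Sec N) R s) i l - fmatmul (Sec N) M (neumann_sum (Sec N) R omega s) i l"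
proof -
  let ?S = "Sec N" and ?P = "neumann_sum (Sec N) R omega s"
  have "fmatmul ?S Linv (fmatpow ?S R s) i l = (\<Sum>t\<in>?S. Linv i t * (id_mat t l - fmatmul ?S M ?P t l))"
    unfolding fmatmul_def[of ?S Linv] using fmatmul_neumann_sum[of ?S R omega M]
      by (intro sum.cong refl) (auto simp: R_def)
  also have "\<dots> = fmatmul ?S Linv id_mat i l - fmatmul ?S Linv (fmatmul ?S M ?P) i l"
    by (simp add: fmatmul_def right_diff_distrib sum_subtractf)
  also have "fmatmul ?S Linv id_mat i l = Linv i l" using l by (simp add: fmatmul_id_right)
  also have "fmatmul ?S Linv (fmatmul ?S M ?P) i l = fmatmul ?S (fmatmul ?S Linv M) ?P i l"
    by (simp add: fmatmul_assoc)
  also have "\<dots> = - fmatmul ?S M ?P i l"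
    unfolding fmatmul_def[of ?S "fmatmul ?S Linv M"] using fmatmul_Linv_M[OF i]
    by (simp add: fmatmul_def[of ?S M] sum_negf)
  finally show ?thesis by simp
qed

lemma M_neumann_sum_far:
  assumes i: "i \<in> Blk N" and lj: "block_of n l = j" and far: "s * b0 + j < N"
  shows "fmatmul (Sec N) M (neumann_sum (Sec N) R omega s) i l = 0"
proof (cases "s = 0")
  case True then show ?thesis by (simp add: fmatmul_def neumann_sum_def)
next
  case False
  show ?thesis unfolding fmatmul_def
  proof (rule sum.neutral, rule ballI, rule ccontr)
    fix t assume "M i t * neumann_sum (Sec N) R omega s t l \<noteq> 0"
    then have "M i t \<noteq> 0" "neumann_sum (Sec N) R omega s t l \<noteq> 0" by auto
    then have "block_dist i t \<le> b0" "block_dist t l \<le> real (s - 1) * b0"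
      using M_block_dist neumann_sum_block_dist by (auto simp: block_dist_def)
    then have "block_dist i l \<le> b0 + real (s - 1) * b0"
      using block_dist_triangle[where a=i and b=t and c=l] by linarith
    moreover have "real (s - 1) = real s - 1" using False by simp
    ultimately have "block_dist i l \<le> real s * b0" by (simp add: algebra_simps)
    moreover have "block_of n i = N" using i in_Blk by simp
    ultimately have "real N - real j \<le> real s * b0" using lj
      by (simp add: block_dist_def dist_real_def)
    moreover have "real (s * b0 + j) < real N" using far by linarith
    ultimately show False by simp
  qed
qed

lemma opnorm_le_Linv_far:
  assumes F: "F \<subseteq> Sec N" and far: "\<And>t. t \<in> F \<Longrightarrow> s * b0 + block_of n t < N"
  shows "opnorm_le F (Blk N) Linv ((c_bnd / c_ell) * rate ^ s)"
proof -
  have "opnorm_le F (Sec N) (fmatpow (Sec N) R s) (rate ^ s)"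
    using opnorm_le_subset[OF opnorm_le_R_pow[OF finite_lessThan] finite_lessThan finite_lessThan F]
    by simp
  from opnorm_le_fmatmul[OF finite_lessThan this opnorm_le_Linv_row]
  have "opnorm_le F (Blk N) (fmatmul (Sec N) Linv (fmatpow (Sec N) R s)) ((c_bnd / c_ell) * rate ^ s)" .
  then show ?thesis
  proof (rule opnorm_le_cong)
    fix i l assume "i \<in> Blk N" "l \<in> F"
    then show "fmatmul (Sec N) Linv (fmatpow (Sec N) R s) i l = Linv i l"
      using Linv_row_decomp[of i N l s] M_neumann_sum_far[of i N l "block_of n l" s] far F by auto
  qed
qed

definition decay_Linv :: "nat \<Rightarrow> real" where
  "decay_Linv m = (if m = 0 then 1 else (c_bnd / c_ell) * rate ^ ((m - 1) div b0))"

lemma decay_Linv_nonneg: "0 \<le> decay_Linv m" using c_bnd c_ell rate by (simp add: decay_Linv_def)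

lemma opnorm_le_Linv_block:
  assumes "j \<le> N"
  shows "opnorm_le (Blk j) (Blk N) Linv (decay_Linv (N - j))"
proof (cases "j = N")
  case True
  have "opnorm_le (Blk N) (Blk N) id_mat 1" by (rule opnorm_le_id[OF finite_Blk])
  then have "opnorm_le (Blk N) (Blk N) Linv 1"
    by (rule opnorm_le_cong) (use Linv_diag in_Blk in auto)
  then show ?thesis using True by (simp add: decay_Linv_def)
next
  case False
  then have jN: "j < N" using assms by simp
  let ?s = "(N - j - 1) div b0"
  have sb: "?s * b0 \<le> N - j - 1" by (simp add: div_times_less_eq_dividend)
  have sj: "?s * b0 + j < N" using sb jN by linarith
  have far: "?s * b0 + block_of n t < N" if "t \<in> Blk j" for t
  proof -
    have "block_of n t = j" using that in_Blk by simp
    then show ?thesis using sj by simp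
  qed
  have "Blk j \<subseteq> Sec N" using jN in_Blk in_Sec by auto
  from opnorm_le_Linv_far[OF this far] show ?thesis using jN by (simp add: decay_Linv_def)
qed

definition bound_Linv :: real where "bound_Linv = 1 + (c_bnd / c_ell) * (b0 * (1 / (1 - rate)))"

lemma sum_decay_Linv: "(\<Sum>m<K. decay_Linv m) \<le> bound_Linv"
proof -
  have "(\<Sum>m<K. decay_Linv m) \<le> decay_Linv 0 + (\<Sum>m<K. (c_bnd / c_ell) * rate ^ (m div b0))"
    by (rule sum_lessThan_shift_le) (use c_bnd c_ell rate decay_Linv_nonneg in \<open>auto simp: decay_Linv_def\<close>)
  also have "(\<Sum>m<K. (c_bnd / c_ell) * rate ^ (m div b0)) = (c_bnd / c_ell) * (\<Sum>m<K. rate ^ (m div b0))"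
    by (simp add: sum_distrib_left)
  also have "\<dots> \<le> (c_bnd / c_ell) * (b0 * (\<Sum>t<K. rate ^ t))"
    using c_bnd c_ell rate b0pos by (intro mult_left_mono sum_div_le) auto
  also have "\<dots> \<le> (c_bnd / c_ell) * (b0 * (1 / (1 - rate)))"
    using c_bnd c_ell rate by (intro mult_left_mono sum_geometric_le) auto
  finally show ?thesis by (simp add: bound_Linv_def decay_Linv_def)
qed

lemma opnorm_le_Linv: "opnorm_le (Sec K) (Sec K) Linv bound_Linv"
  by (rule opnorm_le_block_lower[OF bs Linvlow decay_Linv_nonneg opnorm_le_Linv_block sum_decay_Linv])

subsection \<open>The banded approximation of \<open>L\<^sup>-\<^sup>1\<close>\<close>

text \<open>In block row \<open>N\<close>, below the diagonal: \<open>-M(N,<N) \<omega> \<Sum>\<^bsub>m<k\<^esub> R\<^sup>m\<close>, the \<open>k\<close>-term Neumann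
  approximation of \<open>W = -M(N,<N) M(<N,<N)\<^sup>-\<^sup>1\<close>.\<close>

definition Linv_approx :: "nat \<Rightarrow> imat" where
  "Linv_approx k i l = (if block_of n l = block_of n i then id_mat i l
     else if block_of n i < block_of n l then 0
     else - fmatmul (Sec (block_of n i)) M (neumann_sum (Sec (block_of n i)) R omega k) i l)"

definition approx_err :: "nat \<Rightarrow> imat" where "approx_err k = mat_diff Linv (Linv_approx k)"

lemma Linv_approx_lower: "block_lower n (Linv_approx k)"
  by (rule block_lowerI[OF bs]) (auto simp: Linv_approx_def split: if_splits)

lemma approx_err_lower: "block_lower n (approx_err k)"
  by (rule block_lowerI[OF bs])
    (auto simp: approx_err_def mat_diff_def Linv_approx_def split: if_splits
          dest: block_lower_entry[OF bs Linvlow])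

lemma approx_err_eq:
  assumes i: "i \<in> Blk N" and l: "l \<in> Sec N"
  shows "approx_err k i l = fmatmul (Sec N) Linv (fmatpow (Sec N) R k) i l"
proof -
  have bi: "block_of n i = N" using i in_Blk by simp
  have "block_of n l < N" using l in_Sec by simp
  then have "Linv_approx k i l = - fmatmul (Sec N) M (neumann_sum (Sec N) R omega k) i l" using bi
    by (simp add: Linv_approx_def)
  then show ?thesis using Linv_row_decomp[OF i l, of k] by (simp add: approx_err_def mat_diff_def)
qed

lemma approx_err_upper: "block_of n i \<le> block_of n l \<Longrightarrow> approx_err k i l = 0"
proof -
  assume a: "block_of n i \<le> block_of n l"
  show ?thesis
  proof (cases "block_of n l = block_of n i")
    case True then show ?thesis using Linv_diag
      by (simp add: approx_err_def mat_diff_def Linv_approx_def)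
  next
    case False
    then have "block_of n i < block_of n l" using a by simp
    moreover then have "Linv i l = 0" using block_lower_entry[OF bs Linvlow, of i l] by fastforce
    ultimately show ?thesis using False by (simp add: approx_err_def mat_diff_def Linv_approx_def)
  qed
qed

lemma approx_err_eq_near:
  assumes i: "i \<in> Blk N" and l: "l \<in> Blk j" and jN: "j < N"
  shows "approx_err k i l
    = fmatmul {t \<in> Sec N. block_of n t \<le> j + k * b0} Linv (fmatpow (Sec N) R k) i l"
proof -
  have lS: "l \<in> Sec N" using l jN in_Blk in_Sec by auto
  have "fmatpow (Sec N) R k t l = 0" if "t \<in> Sec N" "\<not> block_of n t \<le> j + k * b0" for t
  proof (rule ccontr)
    assume "fmatpow (Sec N) R k t l \<noteq> 0"
    then have "block_dist t l \<le> real k * b0" by (rule R_pow_block_dist)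
    then have "real (block_of n t) \<le> real j + real k * b0"
      using l in_Blk by (simp add: block_dist_def dist_real_def)
    then show False using that by (simp flip: of_nat_mult of_nat_add)
  qed
  then have "fmatmul (Sec N) Linv (fmatpow (Sec N) R k) i l
      = fmatmul {t \<in> Sec N. block_of n t \<le> j + k * b0} Linv (fmatpow (Sec N) R k) i l"
    unfolding fmatmul_def by (intro sum.mono_neutral_right) auto
  then show ?thesis using approx_err_eq[OF i lS] by simp
qed

text \<open>The error \<open>W R\<^sup>k\<close> in block column \<open>j\<close> only involves the columns of \<open>W\<close> within \<open>k b0\<close>
  blocks of \<open>j\<close>; there \<open>W\<close> itself is already small when \<open>j\<close> is far from \<open>N\<close>.\<close>

lemma opnorm_le_approx_err_far:
  assumes jN: "j < N" and cond: "s = 0 \<or> (s + k) * b0 + j < N"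
  shows "opnorm_le (Blk j) (Blk N) (approx_err k) ((c_bnd / c_ell) * rate ^ s * rate ^ k)"
proof -
  define F where "F = {t \<in> Sec N. block_of n t \<le> j + k * b0}"
  have FS: "F \<subseteq> Sec N" by (auto simp: F_def)
  have BjS: "Blk j \<subseteq> Sec N" using jN in_Blk in_Sec by auto
  have W: "opnorm_le F (Blk N) Linv ((c_bnd / c_ell) * rate ^ s)"
  proof (cases "s = 0")
    case True
    then show ?thesis
      using opnorm_le_subset[OF opnorm_le_Linv_row finite_lessThan finite_Blk FS order_refl] by simp
  next
    case False
    then have "(s + k) * b0 + j < N" using cond by simp
    then show ?thesis by (intro opnorm_le_Linv_far[OF FS]) (auto simp: F_def algebra_simps)
  qed
  have "opnorm_le (Blk j) F (fmatpow (Sec N) R k) (rate ^ k)"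
    by (rule opnorm_le_subset[OF opnorm_le_R_pow[OF finite_lessThan] finite_lessThan finite_lessThan BjS FS])
  from opnorm_le_fmatmul[OF _ this W] show ?thesis
    by (rule opnorm_le_cong) (auto simp: F_def approx_err_eq_near[OF _ _ jN])
qed

definition decay_err :: "nat \<Rightarrow> nat \<Rightarrow> real" where
  "decay_err k m = (if m = 0 then 0 else (c_bnd / c_ell) * rate ^ k * rate ^ ((m - 1) div b0 - k))"

lemma decay_err_nonneg: "0 \<le> decay_err k m" using c_bnd c_ell rate by (simp add: decay_err_def)

lemma opnorm_le_approx_err_block:
  assumes "j \<le> N"
  shows "opnorm_le (Blk j) (Blk N) (approx_err k) (decay_err k (N - j))"
proof (cases "j = N")
  case True
  then show ?thesis using opnorm_le_zero[of "Blk N" "Blk N" "approx_err k"] approx_err_upper in_Blk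
    by (simp add: decay_err_def)
next
  case False
  then have jN: "j < N" using assms by simp
  define s where "s = (N - j - 1) div b0 - k"
  have cond: "s = 0 \<or> (s + k) * b0 + j < N"
  proof (cases "s = 0")
    case False
    then have sk: "s + k = (N - j - 1) div b0" by (simp add: s_def)
    have dd: "(N - j - 1) div b0 * b0 \<le> N - j - 1" by (simp add: div_times_less_eq_dividend)
    have "(s + k) * b0 \<le> N - j - 1" using sk dd by simp
    then show ?thesis using jN by linarith
  qed simp
  from opnorm_le_approx_err_far[OF jN cond] show ?thesis using jN
    by (simp add: decay_err_def s_def mult_ac)
qed

definition err_bound :: "nat \<Rightarrow> real" where
  "err_bound k = (c_bnd / c_ell) * rate ^ k * (b0 * (k + 1 / (1 - rate)))"

lemma sum_decay_err: "(\<Sum>m<K. decay_err k m) \<le> err_bound k"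
proof -
  let ?c = "(c_bnd / c_ell) * rate ^ k"
  have c0: "0 \<le> ?c" using c_bnd c_ell rate by simp
  have "(\<Sum>m<K. decay_err k m) \<le> decay_err k 0 + (\<Sum>m<K. ?c * rate ^ (m div b0 - k))"
    by (rule sum_lessThan_shift_le)
      (use c0 rate c_bnd c_ell in \<open>auto simp: decay_err_def intro!: divide_nonneg_nonneg mult_nonneg_nonneg\<close>)
  also have "\<dots> = ?c * (\<Sum>m<K. rate ^ (m div b0 - k))" by (simp add: decay_err_def sum_distrib_left)
  also have "\<dots> \<le> ?c * (b0 * (\<Sum>t<K. rate ^ (t - k)))"
    using c0 rate b0pos by (intro mult_left_mono sum_div_le[where g="\<lambda>t. rate ^ (t - k)"]) auto
  also have "\<dots> \<le> ?c * (b0 * (k + 1 / (1 - rate)))"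
    using c0 rate by (intro mult_left_mono sum_geometric_shift_le) auto
  finally show ?thesis by (simp add: err_bound_def)
qed

lemma opnorm_le_approx_err: "opnorm_le (Sec K) (Sec K) (approx_err k) (err_bound k)"
  by (rule opnorm_le_block_lower[OF bs approx_err_lower decay_err_nonneg
        opnorm_le_approx_err_block sum_decay_err])

lemma opnorm_le_Linv_approx: "opnorm_le (Sec K) (Sec K) (Linv_approx k) (bound_Linv + err_bound k)"
proof -
  from opnorm_le_diff[OF opnorm_le_Linv opnorm_le_approx_err] show ?thesis
    by (rule opnorm_le_cong) (simp add: approx_err_def mat_diff_def)
qed

lemma err_bound_small:
  assumes "0 < \<eta>"
  shows "\<exists>k\<ge>1. err_bound k \<le> \<eta>"
proof -
  have q1: "norm rate < 1" using rate by simp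
  have "(\<lambda>k. (c_bnd / c_ell) * b0 * (of_nat k * rate ^ k + rate ^ k * (1 / (1 - rate))))
      \<longlonglongrightarrow> (c_bnd / c_ell) * b0 * (0 + 0 * (1 / (1 - rate)))"
    by (intro tendsto_intros powser_times_n_limit_0[OF q1] LIMSEQ_power_zero q1)
  then have lim: "(\<lambda>k. err_bound k) \<longlonglongrightarrow> 0"
    by (simp add: err_bound_def algebra_simps)
  from order_tendstoD(2)[OF lim assms] obtain N where N: "\<And>k. k \<ge> N \<Longrightarrow> err_bound k < \<eta>"
    by (auto simp: eventually_sequentially)
  show ?thesis using N[of "max N 1"] by (intro exI[of _ "max N 1"]) auto
qed

lemma Linv_approx_diag: "block_of n l = block_of n i \<Longrightarrow> Linv_approx k i l = id_mat i l"
  by (simp add: Linv_approx_def)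

subsection \<open>Bounds on \<open>L\<close>\<close>

lemma fmatvec_Linv_transpose_diag:
  "b \<in> Blk j \<Longrightarrow> fmatvec (Blk j) (\<lambda>a b. Linv b a) x b = x b"
  unfolding fmatvec_def using Linv_diag in_Blk
  by (subst sum_id_mat_right[OF finite_Blk, symmetric, where g=x]) (auto intro!: sum.cong)

lemma sum_Linv_M_block:
  "(\<Sum>a\<in>Sec (Suc j). fmatvec (Blk j) (\<lambda>a b. Linv b a) x a * M a b) = (\<Sum>i\<in>Blk j. x i * U i b)"
proof -
  let ?T = "Sec (Suc j)"
  have "(\<Sum>a\<in>?T. fmatvec (Blk j) (\<lambda>a b. Linv b a) x a * M a b)
      = (\<Sum>i\<in>Blk j. x i * (\<Sum>a\<in>?T. Linv i a * M a b))"
    unfolding fmatvec_def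
    by (simp add: sum_distrib_left sum_distrib_right mult_ac sum.swap[of _ ?T])
  also have "\<dots> = (\<Sum>i\<in>Blk j. x i * U i b)"
    using U_entry in_Blk by (intro sum.cong refl) simp
  finally show ?thesis .
qed

text \<open>\<open>U(j,j)\<close> is the Schur complement of \<open>M(<j,<j)\<close> in \<open>M(\<le>j,\<le>j)\<close>: its quadratic form at \<open>x\<close>
  is that of \<open>M\<close> at \<open>L(j,\<le>j)\<^sup>-\<^sup>T x\<close>.\<close>

lemma quad_form_U_diag:
  "quad_form (Blk j) U x = quad_form (Sec (Suc j)) M (fmatvec (Blk j) (\<lambda>a b. Linv b a) x)"
proof -
  let ?T = "Sec (Suc j)" and ?y = "fmatvec (Blk j) (\<lambda>a b. Linv b a) x"
  have BT: "Blk j \<subseteq> ?T" using Sec_Blk by auto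
  have "quad_form ?T M ?y = (\<Sum>a\<in>?T. \<Sum>b\<in>?T. ?y a * M a b * ?y b)"
    by (simp add: quad_form_def fmatvec_def[of ?T] sum_distrib_left mult.assoc)
  also have "\<dots> = (\<Sum>b\<in>?T. (\<Sum>a\<in>?T. ?y a * M a b) * ?y b)"
    by (subst sum.swap) (simp add: sum_distrib_right)
  also have "\<dots> = (\<Sum>b\<in>?T. (\<Sum>i\<in>Blk j. x i * U i b) * ?y b)" by (simp add: sum_Linv_M_block)
  also have "\<dots> = (\<Sum>b\<in>Blk j. (\<Sum>i\<in>Blk j. x i * U i b) * ?y b)"
  proof (rule sum.mono_neutral_right[OF finite_lessThan BT], rule ballI)
    fix b assume "b \<in> ?T - Blk j"
    then have "block_of n b < j" using in_Blk in_Sec by (auto simp: less_Suc_eq)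
    then have "U i b = 0" if "i \<in> Blk j" for i
      using block_upper_entry[OF bs Uup, of i b] that in_Blk by fastforce
    then show "(\<Sum>i\<in>Blk j. x i * U i b) * ?y b = 0" by simp
  qed
  also have "\<dots> = (\<Sum>b\<in>Blk j. (\<Sum>i\<in>Blk j. x i * U i b) * x b)"
    by (simp add: fmatvec_Linv_transpose_diag)
  also have "\<dots> = (\<Sum>i\<in>Blk j. \<Sum>b\<in>Blk j. x i * U i b * x b)"
    by (subst sum.swap) (simp add: sum_distrib_right)
  also have "\<dots> = quad_form (Blk j) U x"
    by (simp add: quad_form_def fmatvec_def sum_distrib_left mult.assoc)
  finally show ?thesis by simp
qed

lemma coercive_U_diag: "coercive (Blk j) U c_ell"
  unfolding coercive_def
proof
  fix x :: iseq
  let ?T = "Sec (Suc j)" and ?y = "fmatvec (Blk j) (\<lambda>a b. Linv b a) x"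
  have "L2_set x (Blk j) = L2_set ?y (Blk j)"
    by (intro L2_set_cong) (simp_all add: fmatvec_Linv_transpose_diag)
  also have "\<dots> \<le> L2_set ?y ?T" using Sec_Blk by (intro L2_set_mono2) (auto simp: finite_Blk)
  finally have "c_ell * (L2_set x (Blk j))\<^sup>2 \<le> c_ell * (L2_set ?y ?T)\<^sup>2"
    using c_ell by (intro mult_left_mono power_mono) auto
  also have "\<dots> \<le> quad_form ?T M ?y" using coercive_M[OF finite_lessThan] by (simp add: coercive_def)
  finally show "c_ell * (L2_set x (Blk j))\<^sup>2 \<le> quad_form (Blk j) U x"
    by (simp add: quad_form_U_diag)
qed

lemma opnorm_le_U_col: "opnorm_le (Blk j) (Sec j) U (bound_Linv * c_bnd)"
proof -
  have "opnorm_le (Blk j) (Sec j) (fmatmul (Sec j) Linv M) (bound_Linv * c_bnd)"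
    by (rule opnorm_le_fmatmul[OF finite_lessThan opnorm_le_M[OF finite_Blk finite_lessThan] opnorm_le_Linv])
  then show ?thesis
  proof (rule opnorm_le_cong)
    fix i l assume i: "i \<in> Sec j" and "l \<in> Blk j"
    have "fmatmul (Sec j) Linv M i l = (\<Sum>t<r i. Linv i t * M t l)"
      unfolding fmatmul_def using block_lower_zero[OF bs Linvlow] r_le_Sec[OF i]
      by (intro sum.mono_neutral_right) auto
    then show "fmatmul (Sec j) Linv M i l = U i l" using U_entry by simp
  qed
qed

lemma L_block_eq:
  assumes i: "i \<in> Blk N" and l: "l \<in> Blk j" and jN: "j < N"
  shows "fmatmul (Blk j) L U i l = M i l - fmatmul (Sec j) L U i l"
proof -
  have le: "Sec (Suc j) \<subseteq> {..<r i}" using i jN in_Blk block_structure_mono[OF bs] by auto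
  have "M i l = (\<Sum>s<r i. L i s * U s l)" by (rule M_entry)
  also have "\<dots> = (\<Sum>s\<in>Sec (Suc j). L i s * U s l)"
  proof (rule sum.mono_neutral_right[OF finite_lessThan le], rule ballI)
    fix s assume "s \<in> {..<r i} - Sec (Suc j)"
    then have "\<not> block_of n s < Suc j" using in_Sec by blast
    then have "j < block_of n s" by simp
    then have "U s l = 0" using block_upper_entry[OF bs Uup, of s l] l in_Blk by fastforce
    then show "L i s * U s l = 0" by simp
  qed
  also have "\<dots> = fmatmul (Sec j) L U i l + fmatmul (Blk j) L U i l"
    unfolding fmatmul_def using Sec_Blk finite_Blk by (simp add: sum.union_disjoint)
  finally show ?thesis by simp
qed

definition growth_L :: real where "growth_L = 1 + bound_Linv * c_bnd / c_ell"
definition gamma_L :: "nat \<Rightarrow> real" where "gamma_L t = (c_bnd / c_ell) * (\<Sum>u<t. growth_L ^ u)"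

lemma growth_L_ge_1: "1 \<le> growth_L"
proof -
  have "0 \<le> bound_Linv" using opnorm_le_Linv[of 0] by (simp add: opnorm_le_def)
  then show ?thesis using c_bnd c_ell by (simp add: growth_L_def)
qed

lemma gamma_L_nonneg: "0 \<le> gamma_L t" using c_bnd c_ell growth_L_ge_1
  by (simp add: gamma_L_def sum_nonneg)

lemma gamma_L_Suc: "gamma_L (Suc t) = c_bnd / c_ell + growth_L * gamma_L t"
proof -
  have "(\<Sum>u<Suc t. growth_L ^ u) = 1 + growth_L * (\<Sum>u<t. growth_L ^ u)"
    by (simp only: sum.lessThan_Suc_shift) (simp del: sum.lessThan_Suc add: sum_distrib_left)
  then show ?thesis by (simp add: gamma_L_def algebra_simps)
qed

lemma gamma_L_mono: "s \<le> t \<Longrightarrow> gamma_L s \<le> gamma_L t"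
  unfolding gamma_L_def using c_bnd c_ell growth_L_ge_1 by (intro mult_left_mono sum_mono2) auto

lemma opnorm_le_M_block: "opnorm_le (Blk j) (Blk N) M (if N \<le> j + b0 then c_bnd else 0)"
proof (cases "N \<le> j + b0")
  case True then show ?thesis using opnorm_le_M[OF finite_Blk finite_Blk] by simp
next
  case False
  have "M i l = 0" if "i \<in> Blk N" "l \<in> Blk j" for i l
  proof (rule ccontr)
    assume "M i l \<noteq> 0"
    then have "dist (real (block_of n i)) (real (block_of n l)) \<le> b0" by (rule M_block_dist)
    then show False using that False in_Blk by (simp add: dist_real_def)
  qed
  then show ?thesis using False by (simp add: opnorm_le_zero)
qed

text \<open>Block column recursion \<open>L(N,j) U(j,j) = M(N,j) - L(N,<j) U(<j,j)\<close>. The bound vanishes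
  for \<open>j + b0 \<le> N\<close>: \<open>L\<close> inherits the block band of \<open>M\<close>.\<close>

lemma opnorm_le_L_col: "j \<le> N \<Longrightarrow> opnorm_le (Sec j) (Blk N) L (gamma_L (j + b0 - N))"
proof (induction j)
  case 0
  have "opnorm_le (Sec 0) (Blk N) L 0" using bs
    by (intro opnorm_le_zero) (simp add: block_structure_def)
  then show ?case using gamma_L_nonneg by (rule opnorm_le_mono)
next
  case (Suc j)
  then have jN: "j < N" by simp
  have IH: "opnorm_le (Sec j) (Blk N) L (gamma_L (j + b0 - N))" using Suc by simp
  let ?lam = "gamma_L (j + b0 - N)" and ?Mb = "if N \<le> j + b0 then c_bnd else 0"
  have b3: "opnorm_le (Blk j) (Blk N) (fmatmul (Sec j) L U) (?lam * (bound_Linv * c_bnd))"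
    by (rule opnorm_le_fmatmul[OF finite_lessThan opnorm_le_U_col IH])
  have b4: "opnorm_le (Blk j) (Blk N) (fmatmul (Blk j) L U) (?Mb + ?lam * (bound_Linv * c_bnd))"
    using opnorm_le_diff[OF opnorm_le_M_block b3]
    by (rule opnorm_le_cong) (use L_block_eq jN in auto)
  have b5: "opnorm_le (Blk j) (Blk N) L ((?Mb + ?lam * (bound_Linv * c_bnd)) / c_ell)"
    by (rule opnorm_le_right_coercive[OF finite_Blk finite_Blk c_ell(1)
          coercive_transpose[OF coercive_U_diag] b4])
  have "opnorm_le (Sec j \<union> Blk j) (Blk N) L (?lam + (?Mb + ?lam * (bound_Linv * c_bnd)) / c_ell)"
    by (rule opnorm_le_Un[OF finite_lessThan finite_Blk Sec_Blk(2) IH b5])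
  moreover have "?lam + (?Mb + ?lam * (bound_Linv * c_bnd)) / c_ell \<le> gamma_L (Suc j + b0 - N)"
  proof (cases "N \<le> j + b0")
    case True
    then have "Suc j + b0 - N = Suc (j + b0 - N)" by simp
    then show ?thesis using True c_ell by (simp add: gamma_L_Suc growth_L_def field_simps)
  next
    case False
    then have "j + b0 - N = 0" by simp
    then show ?thesis using False gamma_L_nonneg by (simp add: gamma_L_def)
  qed
  ultimately have "opnorm_le (Sec j \<union> Blk j) (Blk N) L (gamma_L (Suc j + b0 - N))"
    by (rule opnorm_le_mono)
  then show ?case by (simp only: Sec_Blk(1)[of j])
qed

definition decay_L :: "nat \<Rightarrow> real" where
  "decay_L m = (if m = 0 then 1 else if m \<le> b0 then gamma_L b0 else 0)"

lemma decay_L_nonneg: "0 \<le> decay_L m" using gamma_L_nonneg by (simp add: decay_L_def)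

lemma opnorm_le_L_block:
  assumes "j \<le> N"
  shows "opnorm_le (Blk j) (Blk N) L (decay_L (N - j))"
proof (cases "j = N")
  case True
  have "opnorm_le (Blk N) (Blk N) id_mat 1" by (rule opnorm_le_id[OF finite_Blk])
  then have "opnorm_le (Blk N) (Blk N) L 1" by (rule opnorm_le_cong) (use L_diag in_Blk in auto)
  then show ?thesis using True by (simp add: decay_L_def)
next
  case False
  then have jN: "j < N" using assms by simp
  have "opnorm_le (Sec (Suc j)) (Blk N) L (gamma_L (Suc j + b0 - N))"
    by (rule opnorm_le_L_col) (use jN in simp)
  moreover have "Blk j \<subseteq> Sec (Suc j)" using Sec_Blk(1)[of j] by blast
  ultimately have b: "opnorm_le (Blk j) (Blk N) L (gamma_L (Suc j + b0 - N))"
    using opnorm_le_subset[OF _ finite_lessThan finite_Blk _ order_refl] by blast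
  show ?thesis
  proof (cases "N - j \<le> b0")
    case True
    then have "gamma_L (Suc j + b0 - N) \<le> gamma_L b0" using jN by (intro gamma_L_mono) simp
    moreover have "decay_L (N - j) = gamma_L b0" using True jN by (simp add: decay_L_def)
    ultimately show ?thesis using b opnorm_le_mono by metis
  next
    case False
    then have "Suc j + b0 - N = 0" by simp
    then show ?thesis using b False jN by (simp add: decay_L_def gamma_L_def)
  qed
qed

definition bound_L :: real where "bound_L = 1 + b0 * gamma_L b0"

lemma bound_L_ge_1: "1 \<le> bound_L" using gamma_L_nonneg by (simp add: bound_L_def)

lemma sum_decay_L: "(\<Sum>m<K. decay_L m) \<le> bound_L"
proof -
  have "(\<Sum>m<K. decay_L m) \<le> decay_L 0 + (\<Sum>m<K. if m < b0 then gamma_L b0 else 0)"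
    by (rule sum_lessThan_shift_le) (auto simp: decay_L_def gamma_L_nonneg)
  also have "(\<Sum>m<K. if m < b0 then gamma_L b0 else 0) = (\<Sum>m\<in>{..<K} \<inter> {..<b0}. gamma_L b0)"
    by (simp add: sum.If_cases Int_def)
  also have "\<dots> \<le> (\<Sum>m\<in>{..<b0}. gamma_L b0)" using gamma_L_nonneg by (intro sum_mono2) auto
  finally show ?thesis by (simp add: bound_L_def decay_L_def)
qed

lemma opnorm_le_L: "opnorm_le (Sec K) (Sec K) L bound_L"
  by (rule opnorm_le_block_lower[OF bs Llow decay_L_nonneg opnorm_le_L_block sum_decay_L])

lemma Linv_approx_nonzero:
  assumes k: "1 \<le> k" and nz: "Linv_approx k i l \<noteq> 0"
  shows "d i l \<le> real (k * b0) \<and> block_dist i l \<le> real (k * b0)"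
proof (cases "block_of n l = block_of n i")
  case True
  then have "id_mat i l \<noteq> 0" using nz by (simp add: Linv_approx_def)
  then have "i = l" by (simp add: id_mat_def split: if_splits)
  then show ?thesis by (simp add: d_refl block_dist_refl)
next
  case False
  show ?thesis
  proof (cases "block_of n i < block_of n l")
    case True then show ?thesis using nz False by (simp add: Linv_approx_def)
  next
    case False2: False
    let ?N = "block_of n i"
    have "fmatmul (Sec ?N) M (neumann_sum (Sec ?N) R omega k) i l \<noteq> 0" using nz False False2
      by (simp add: Linv_approx_def)
    then obtain t where "M i t * neumann_sum (Sec ?N) R omega k t l \<noteq> 0"
      unfolding fmatmul_def by (meson sum.not_neutral_contains_not_neutral)
    then have Mt: "M i t \<noteq> 0" and Pt: "neumann_sum (Sec ?N) R omega k t l \<noteq> 0" by auto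
    have d1: "d i t \<le> b0" using M_dist[OF Mt] .
    have d2: "d t l \<le> real (k - 1) * b0"
      by (rule neumann_sum_nonzero_dist[where dl=d, OF d_refl d_triangle _ _ Pt]) (use R_nonzero in auto)
    have e1: "block_dist i t \<le> b0" using M_block_dist[OF Mt] by (simp add: block_dist_def)
    have e2: "block_dist t l \<le> real (k - 1) * b0" by (rule neumann_sum_block_dist[OF Pt])
    have kk: "real b0 + real (k - 1) * b0 = real (k * b0)" using k
      by (simp add: algebra_simps of_nat_diff)
    have "d i l \<le> real (k * b0)" using d_triangle[of i l t] d1 d2 kk by linarith
    moreover have "block_dist i l \<le> real (k * b0)" using block_dist_triangle[of i l t] e1 e2 kk
      by linarith
    ultimately show ?thesis by simp
  qed
qed

lemma Linv_approx_in_B: "1 \<le> k \<Longrightarrow> in_B d (k * b0) (Linv_approx k)"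
  unfolding in_B_def using Linv_approx_nonzero by (meson not_less)

lemma Linv_approx_block_banded: "1 \<le> k \<Longrightarrow> block_banded n (k * b0) (Linv_approx k)"
  unfolding block_banded_def block_zero_def
proof (intro allI impI ballI)
  fix I J a l assume k: "1 \<le> k" and far: "real (k * b0) < dist (real I) (real J)"
    and a: "a \<in> Blk I" and l: "l \<in> Blk J"
  have "block_dist a l = dist (real I) (real J)" using a l in_Blk by (simp add: block_dist_def)
  then show "Linv_approx k a l = 0" using Linv_approx_nonzero[OF k, of a l] far by auto
qed

lemma Linv_approx_block_identity: "block_identity n (Linv_approx k) i"
  unfolding block_identity_def using in_Blk by (auto simp: Linv_approx_def id_mat_def)

lemma unit_block_lower_Linv_approx: "unit_block_lower n (Linv_approx k)"
  by unfold_locales (auto simp: bs Linv_approx_lower Linv_approx_diag)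

lemma fmatmul_Linv_L:
  assumes l: "l \<in> Sec K"
  shows "fmatmul (Sec K) Linv L l t = id_mat l t"
proof -
  have "fmatmul (Sec K) Linv L l t = (\<Sum>s<r l. Linv l s * L s t)"
    unfolding fmatmul_def using block_lower_zero[OF bs Linvlow] r_le_Sec[OF l]
    by (intro sum.mono_neutral_right) auto
  also have "\<dots> = mat_mult Linv L l t" by (simp add: mat_mult_block_lower[OF bs Linvlow])
  finally show ?thesis using LinvL by simp
qed

text \<open>\<open>L\<^sub>\<epsilon> = L\<^sub>\<epsilon> L\<^sup>-\<^sup>1 L = L\<^sub>\<epsilon> (L\<^sub>\<epsilon>\<^sup>-\<^sup>1 + E) L = L + L\<^sub>\<epsilon> E L\<close> with \<open>E = L\<^sup>-\<^sup>1 - L\<^sub>\<epsilon>\<^sup>-\<^sup>1\<close>, on every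
  section since all factors are block lower triangular.\<close>

lemma Linv_approx_inverse_eq:
  fixes k K :: nat
  defines "Y \<equiv> unit_lower_inv n (Linv_approx k)" and "S \<equiv> Sec K"
  assumes i: "i \<in> S" and t: "t \<in> S"
  shows "Y i t = L i t + fmatmul S (fmatmul S Y (approx_err k)) L i t"
proof -
  interpret Y: unit_block_lower n "Linv_approx k" by (rule unit_block_lower_Linv_approx)
  have Y_Le: "fmatmul S Y (Linv_approx k) i s = id_mat i s" for s
  proof -
    have "fmatmul S Y (Linv_approx k) i s = (\<Sum>l<r i. Y i l * Linv_approx k l s)"
      unfolding fmatmul_def S_def using block_lower_zero[OF bs Y.Y_lower] r_le_Sec i
      by (intro sum.mono_neutral_right) (auto simp: S_def Y_def)
    then show ?thesis using Y.Y_A_inverse by (simp add: Y_def)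
  qed
  have Y_Linv: "fmatmul S Y Linv i s = id_mat i s + fmatmul S Y (approx_err k) i s" for s
  proof -
    have "fmatmul S Y Linv i s = fmatmul S Y (Linv_approx k) i s + fmatmul S Y (approx_err k) i s"
      by (simp add: fmatmul_def approx_err_def mat_diff_def sum.distrib[symmetric] algebra_simps)
    then show ?thesis using Y_Le by simp
  qed
  have "Y i t = fmatmul S Y id_mat i t" using t by (simp add: fmatmul_id_right S_def)
  also have "\<dots> = fmatmul S Y (fmatmul S Linv L) i t"
    unfolding fmatmul_def[of S Y] by (intro sum.cong refl) (simp add: fmatmul_Linv_L S_def)
  also have "\<dots> = fmatmul S (fmatmul S Y Linv) L i t" by (simp add: fmatmul_assoc S_def)
  also have "\<dots> = fmatmul S id_mat L i t + fmatmul S (fmatmul S Y (approx_err k)) L i t"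
    unfolding fmatmul_def[of S "fmatmul S Y Linv"] fmatmul_def[of S id_mat]
      fmatmul_def[of S "fmatmul S Y (approx_err k)"]
    by (simp add: Y_Linv distrib_right sum.distrib)
  also have "fmatmul S id_mat L i t = L i t" using i by (simp add: fmatmul_id_left S_def)
  finally show ?thesis .
qed

lemma opnorm_le_Linv_approx_inverse:
  assumes small: "err_bound k * bound_L \<le> 1 / 2"
  shows "opnorm_le (Sec K) (Sec K) (unit_lower_inv n (Linv_approx k)) (2 * bound_L)"
proof -
  let ?S = "Sec K" and ?Y = "unit_lower_inv n (Linv_approx k)" and ?\<theta> = "err_bound k * bound_L"
  have \<theta>: "0 \<le> ?\<theta>" "?\<theta> < 1"
    using small opnorm_le_nonneg[OF opnorm_le_approx_err] bound_L_ge_1 by auto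
  have "opnorm_le ?S ?S ?Y (bound_L + ?\<theta> * c)" if Y: "opnorm_le ?S ?S ?Y c" for c
  proof -
    have "opnorm_le ?S ?S (fmatmul ?S (fmatmul ?S ?Y (approx_err k)) L) (c * err_bound k * bound_L)"
      by (intro opnorm_le_fmatmul[OF finite_lessThan opnorm_le_L]
            opnorm_le_fmatmul[OF finite_lessThan opnorm_le_approx_err Y])
    from opnorm_le_add[OF opnorm_le_L this] have "opnorm_le ?S ?S ?Y (bound_L + c * err_bound k * bound_L)"
      by (rule opnorm_le_cong) (simp add: Linv_approx_inverse_eq)
    then show ?thesis by (simp add: mult_ac)
  qed
  from opnorm_le_fixpoint[OF finite_lessThan finite_lessThan this _ \<theta>]
  have "opnorm_le ?S ?S ?Y (bound_L / (1 - ?\<theta>))" using bound_L_ge_1 by simp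
  moreover have "bound_L / (1 - ?\<theta>) \<le> 2 * bound_L"
    using small \<theta> bound_L_ge_1 by (simp add: field_simps)
  ultimately show ?thesis by (rule opnorm_le_mono)
qed

lemma Linv_approx_properties:
  assumes small: "err_bound k * bound_L \<le> 1 / 2"
  defines "Le \<equiv> unit_lower_inv n (Linv_approx k)"
  shows "bounded_l2 (mat_diff Linv (Linv_approx k))"
    and "opnorm (mat_diff Linv (Linv_approx k)) \<le> err_bound k"
    and "bounded_l2 Le" "bounded_l2 (Linv_approx k)"
    and "matvec Le (matvec (Linv_approx k) x) = x" "matvec (Linv_approx k) (matvec Le x) = x"
    and "opnorm Le + opnorm (Linv_approx k) \<le> 2 * bound_L + bound_Linv + err_bound k"
proof -
  interpret Y: unit_block_lower n "Linv_approx k" by (rule unit_block_lower_Linv_approx)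
  note err = bounded_l2_if_sections[OF bs approx_err_lower opnorm_le_approx_err[where k=k],
      unfolded approx_err_def]
  note inv = bounded_l2_if_sections[OF bs Y.Y_lower opnorm_le_Linv_approx_inverse[OF small]]
  note approx = bounded_l2_if_sections[OF bs Linv_approx_lower opnorm_le_Linv_approx[where k=k]]
  show "bounded_l2 (mat_diff Linv (Linv_approx k))" "opnorm (mat_diff Linv (Linv_approx k)) \<le> err_bound k"
    by (fact err)+
  show "bounded_l2 Le" "bounded_l2 (Linv_approx k)" unfolding Le_def by (fact inv approx)+
  show "matvec Le (matvec (Linv_approx k) x) = x" "matvec (Linv_approx k) (matvec Le x) = x"
    unfolding Le_def by (fact Y.matvec_Y_A Y.matvec_A_Y)+
  show "opnorm Le + opnorm (Linv_approx k) \<le> 2 * bound_L + bound_Linv + err_bound k"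
    unfolding Le_def using inv(2) approx(2) by linarith
qed

lemma banded_inverse_approximation:
  "\<exists>K. \<forall>\<epsilon>>0. \<exists>(b::nat) Le Leinv.
     block_lower n Leinv \<and> in_B d b Leinv \<and> (\<forall>i. block_identity n Leinv i) \<and>
     block_banded n b Leinv \<and>
     bounded_l2 (mat_diff Linv Leinv) \<and> opnorm (mat_diff Linv Leinv) \<le> \<epsilon> \<and>
     bounded_l2 Le \<and> bounded_l2 Leinv \<and>
     (\<forall>x. in_l2 x \<longrightarrow> matvec Le (matvec Leinv x) = x \<and> matvec Leinv (matvec Le x) = x) \<and>
     opnorm Le + opnorm Leinv \<le> K"
proof (intro exI[of _ "2 * bound_L + bound_Linv + 1"] allI impI)
  fix \<epsilon> :: real assume \<epsilon>: "0 < \<epsilon>"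
  have "0 < min \<epsilon> (min 1 (1 / (2 * bound_L)))" using \<epsilon> bound_L_ge_1 by simp
  then obtain k where k: "1 \<le> k" "err_bound k \<le> min \<epsilon> (min 1 (1 / (2 * bound_L)))"
    using err_bound_small by blast
  then have small: "err_bound k * bound_L \<le> 1 / 2" using bound_L_ge_1 by (simp add: field_simps)
  note props = Linv_approx_properties[OF small]
  show "\<exists>(b::nat) Le Leinv.
     block_lower n Leinv \<and> in_B d b Leinv \<and> (\<forall>i. block_identity n Leinv i) \<and>
     block_banded n b Leinv \<and>
     bounded_l2 (mat_diff Linv Leinv) \<and> opnorm (mat_diff Linv Leinv) \<le> \<epsilon> \<and>
     bounded_l2 Le \<and> bounded_l2 Leinv \<and>
     (\<forall>x. in_l2 x \<longrightarrow> matvec Le (matvec Leinv x) = x \<and> matvec Leinv (matvec Le x) = x) \<and>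
     opnorm Le + opnorm Leinv \<le> 2 * bound_L + bound_Linv + 1"
    using Linv_approx_lower Linv_approx_in_B[OF k(1)] Linv_approx_block_identity
      Linv_approx_block_banded[OF k(1)] props k(2)
    by (intro exI[of _ "k * b0"] exI[of _ "unit_lower_inv n (Linv_approx k)"] exI[of _ "Linv_approx k"])
      (auto intro: order_trans)
qed

end

theorem lemma3p9:
  fixes M L U Linv :: imat and n :: "nat \<Rightarrow> nat" and d :: "nat \<Rightarrow> nat \<Rightarrow> real" and b0 :: nat
  assumes "bounded_l2 M" and "elliptic M"
    and "block_structure n"
    and "block_banded n b0 M"
    and "nat_metric d" and "in_B d b0 M"
    and "block_lower n L" and "\<forall>i. block_identity n L i" and "block_upper n U"
    and "M = mat_mult L U"
    and "block_lower n Linv" and "mat_mult L Linv = id_mat" and "mat_mult Linv L = id_mat"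
  shows "\<exists>K. \<forall>\<epsilon>>0. \<exists>(b::nat) Le Leinv.
           block_lower n Leinv \<and> in_B d b Leinv \<and> (\<forall>i. block_identity n Leinv i) \<and>
           block_banded n b Leinv \<and>
           bounded_l2 (mat_diff Linv Leinv) \<and> opnorm (mat_diff Linv Leinv) \<le> \<epsilon> \<and>
           bounded_l2 Le \<and> bounded_l2 Leinv \<and>
           (\<forall>x. in_l2 x \<longrightarrow> matvec Le (matvec Leinv x) = x \<and> matvec Leinv (matvec Le x) = x) \<and>
           opnorm Le + opnorm Leinv \<le> K"
proof -
  have "block_banded n (max b0 1) M" "in_B d (max b0 1) M"
    using block_banded_mono[OF assms(4)] in_B_mono[OF assms(6)] by simp_all
  then interpret block_LU M L U Linv n d "max b0 1"
    using assms by unfold_locales auto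
  show ?thesis by (rule banded_inverse_approximation)
qed
end
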